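(* Let $f_1,\dots,f_N$ be holomorphic functions on an open set in $\mathbb{C}^{n+1}$ and let $$r=z_{n+1}+\overline{z_{n+1}}+\sum_{\mu=1}^N f_\mu\overline{f_\mu}.$$ Let $0\le k\le n$ and let $G_1,\dots,G_k$ be holomorphic functions on the same open set. Then there is a nonzero constant $c_{n,k}$ depending only on $n,k$ such that the coefficient of $dz_1\wedge\cdots\wedge dz_{n+1}\wedge d\bar z_1\wedge\cdots\wedge d\bar z_{n+1}$ in $$\partial r\wedge\bar\partial r\wedge(\partial\bar\partial r)^{n-k}\wedge\bigwedge_{\lambda=1}^k\big(dG_\lambda\wedge\overline{dG_\lambda}\big)$$ equals $$c_{n,k}\sum_{1\le\mu_1<\cdots<\mu_{n-k}\le N}\left|\frac{\partial(f_{\mu_1},\dots,f_{\mu_{n-k}},G_1,\dots,G_k)}{\partial(z_1,\dots,z_n)}+\sum_{\mu=1}^N\frac{\partial(f_{\mu_1},\dots,f_{\mu_{n-k}},G_1,\dots,G_k,f_\mu)}{\partial(z_1,\dots,z_{n+1})}\,\overline{f_\mu}\right|^2 .$$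
   Context: For holomorphic functions $h_1,\dots,h_m$, $\frac{\partial(h_1,\dots,h_m)}{\partial(z_1,\dots,z_m)}$ denotes the determinant of the $m\times m$ matrix whose $i$-th row is $(\partial h_i/\partial z_1,\dots,\partial h_i/\partial z_m)$. When $k=n$ the sum is over the single empty index tuple. *)

theory Defs
  imports "HOL-Analysis.Analysis"
begin

text \<open>Points of C^(n+1) are vectors of type complex^'m with CARD('m) = n+1;
  the coordinate z_(j+1) (j = 0..n) is x $ idx j for a bijection idx from {..n} onto 'm.\<close>

definition holo_on :: "(complex ^ 'm::finite) set \<Rightarrow> (complex ^ 'm \<Rightarrow> complex) \<Rightarrow> bool" where
  "holo_on U g \<longleftrightarrow> (\<forall>p\<in>U. \<exists>L. (g has_derivative L) (at p) \<and> (\<forall>c x. L (c *s x) = c * L x))"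

definition wz :: "(nat \<Rightarrow> 'm::finite) \<Rightarrow> nat \<Rightarrow> (complex ^ 'm \<Rightarrow> complex) \<Rightarrow> complex ^ 'm \<Rightarrow> complex" where
  "wz idx j g p = (frechet_derivative g (at p) (axis (idx j) 1)
                   - \<i> * frechet_derivative g (at p) (axis (idx j) \<i>)) / 2"

definition wzb :: "(nat \<Rightarrow> 'm::finite) \<Rightarrow> nat \<Rightarrow> (complex ^ 'm \<Rightarrow> complex) \<Rightarrow> complex ^ 'm \<Rightarrow> complex" where
  "wzb idx j g p = (frechet_derivative g (at p) (axis (idx j) 1)
                   + \<i> * frechet_derivative g (at p) (axis (idx j) \<i>)) / 2"

text \<open>Exterior algebra (at a point) on the 2m generators
  dz_1,...,dz_m, dzbar_1,...,dzbar_m, numbered 0,...,m-1, m,...,2m-1.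
  A form is given by its coefficient function on (finite) sets of generators,
  the set I standing for the wedge of the generators in I in increasing order.\<close>
type_synonym form = "nat set \<Rightarrow> complex"

definition shuffle_sign :: "nat set \<Rightarrow> nat set \<Rightarrow> complex" where
  "shuffle_sign I J = (-1) ^ card {(i, j). i \<in> I \<and> j \<in> J \<and> j < i}"

definition wedge :: "form \<Rightarrow> form \<Rightarrow> form" where
  "wedge \<alpha> \<beta> K = (\<Sum>I\<in>Pow K. shuffle_sign I (K - I) * \<alpha> I * \<beta> (K - I))"

definition form_one :: form where
  "form_one I = (if I = {} then 1 else 0)"

definition gen :: "nat \<Rightarrow> form" where
  "gen i I = (if I = {i} then 1 else 0)"

fun wedge_pow :: "form \<Rightarrow> nat \<Rightarrow> form" where
  "wedge_pow \<omega> 0 = form_one"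
| "wedge_pow \<omega> (Suc k) = wedge \<omega> (wedge_pow \<omega> k)"

fun bigwedge :: "(nat \<Rightarrow> form) \<Rightarrow> nat \<Rightarrow> form" where
  "bigwedge F 0 = form_one"
| "bigwedge F (Suc k) = wedge (bigwedge F k) (F k)"

definition del_form :: "nat \<Rightarrow> (nat \<Rightarrow> 'm::finite) \<Rightarrow> (complex ^ 'm \<Rightarrow> complex) \<Rightarrow> complex ^ 'm \<Rightarrow> form" where
  "del_form m idx g p = (\<lambda>K. \<Sum>j<m. wz idx j g p * gen j K)"

definition delbar_form :: "nat \<Rightarrow> (nat \<Rightarrow> 'm::finite) \<Rightarrow> (complex ^ 'm \<Rightarrow> complex) \<Rightarrow> complex ^ 'm \<Rightarrow> form" where
  "delbar_form m idx g p = (\<lambda>K. \<Sum>j<m. wzb idx j g p * gen (m + j) K)"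

definition d_form :: "nat \<Rightarrow> (nat \<Rightarrow> 'm::finite) \<Rightarrow> (complex ^ 'm \<Rightarrow> complex) \<Rightarrow> complex ^ 'm \<Rightarrow> form" where
  "d_form m idx g p = (\<lambda>K. del_form m idx g p K + delbar_form m idx g p K)"

definition ddbar_form :: "nat \<Rightarrow> (nat \<Rightarrow> 'm::finite) \<Rightarrow> (complex ^ 'm \<Rightarrow> complex) \<Rightarrow> complex ^ 'm \<Rightarrow> form" where
  "ddbar_form m idx g p = (\<lambda>K. \<Sum>j<m. \<Sum>l<m.
      wz idx j (wzb idx l g) p * wedge (gen j) (gen (m + l)) K)"

definition detn :: "nat \<Rightarrow> (nat \<Rightarrow> nat \<Rightarrow> complex) \<Rightarrow> complex" where
  "detn m A = (\<Sum>\<sigma> | \<sigma> permutes {..<m}. of_int (sign \<sigma>) * (\<Prod>i<m. A i (\<sigma> i)))"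

definition jac :: "(nat \<Rightarrow> 'm::finite) \<Rightarrow> (complex ^ 'm \<Rightarrow> complex) list \<Rightarrow> complex ^ 'm \<Rightarrow> complex" where
  "jac idx hs p = detn (length hs) (\<lambda>i j. wz idx j (hs ! i) p)"

end

theory Submission
  imports Defs "HOL-Complex_Analysis.Complex_Analysis" "Jordan_Normal_Form.Determinant"
    "HOL-Combinatorics.Multiset_Permutations"
begin

(* At a point, every factor of the form is a product of a holomorphic one-form and its conjugate:
   del r and delbar r are (u, conj u) with u = dz_(n+1) + sum_mu conj(f_mu) del f_mu, del delbar r is
   sum_mu del f_mu wedge conj(del f_mu) (the derivatives of the f_mu being holomorphic again), and
   dG wedge d(conj G) = del G wedge conj(del G).  A top-degree product of n+1 such pairs is, up to a sign
   that only depends on n, the squared modulus of the determinant of the coefficient rows.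
   Expanding the (n-k)-th power of del delbar r, repeated indices give equal rows and each set of
   n-k distinct indices occurs (n-k)! times; expanding the remaining determinant along the row of
   u gives the Jacobians of the statement. *)

section \<open>Exterior algebra on coefficient functions\<close>

text \<open>Coefficients on infinite sets of generators are junk (\<open>wedge\<close> sums over their power set),
  so forms are compared on finite sets only.\<close>

definition form_eq :: "form \<Rightarrow> form \<Rightarrow> bool" where
  "form_eq a b \<longleftrightarrow> (\<forall>K. finite K \<longrightarrow> a K = b K)"

lemma form_eq_refl [simp]: "form_eq a a"
  by (simp add: form_eq_def)

lemma shuffle_sign_empty [simp]: "shuffle_sign {} J = 1" "shuffle_sign I {} = 1"
  by (simp_all add: shuffle_sign_def)

lemma shuffle_sign_Un_left:
  assumes "finite A" "finite B" "finite C" "A \<inter> B = {}"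
  shows "shuffle_sign (A \<union> B) C = shuffle_sign A C * shuffle_sign B C"
proof -
  have "{(i, j). i \<in> A \<union> B \<and> j \<in> C \<and> j < i} =
     {(i, j). i \<in> A \<and> j \<in> C \<and> j < i} \<union> {(i, j). i \<in> B \<and> j \<in> C \<and> j < i}" by auto
  moreover have "card \<dots> = card {(i, j). i \<in> A \<and> j \<in> C \<and> j < i} + card {(i, j). i \<in> B \<and> j \<in> C \<and> j < i}"
    by (rule card_Un_disjoint; use assms in \<open>auto intro: finite_subset[of _ "A \<times> C"] finite_subset[of _ "B \<times> C"]\<close>)
  ultimately show ?thesis
    unfolding shuffle_sign_def by (simp add: power_add)
qed

lemma shuffle_sign_Un_right:
  assumes "finite A" "finite B" "finite C" "B \<inter> C = {}"
  shows "shuffle_sign A (B \<union> C) = shuffle_sign A B * shuffle_sign A C"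
proof -
  have "{(i, j). i \<in> A \<and> j \<in> B \<union> C \<and> j < i} =
     {(i, j). i \<in> A \<and> j \<in> B \<and> j < i} \<union> {(i, j). i \<in> A \<and> j \<in> C \<and> j < i}" by auto
  moreover have "card \<dots> = card {(i, j). i \<in> A \<and> j \<in> B \<and> j < i} + card {(i, j). i \<in> A \<and> j \<in> C \<and> j < i}"
    by (rule card_Un_disjoint; use assms in \<open>auto intro: finite_subset[of _ "A \<times> B"] finite_subset[of _ "A \<times> C"]\<close>)
  ultimately show ?thesis
    unfolding shuffle_sign_def by (simp add: power_add)
qed

lemma shuffle_sign_assoc:
  assumes "finite A" "finite B" "finite C" "A \<inter> B = {}" "A \<inter> C = {}" "B \<inter> C = {}"
  shows "shuffle_sign (A \<union> B) C * shuffle_sign A B = shuffle_sign A (B \<union> C) * shuffle_sign B C"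
  using assms by (simp add: shuffle_sign_Un_left shuffle_sign_Un_right ac_simps)

lemma wedge_assoc:
  assumes K: "finite K"
  shows "wedge (wedge a b) c K = wedge a (wedge b c) K"
proof -
  have "wedge (wedge a b) c K = (\<Sum>I\<in>Pow K. \<Sum>J\<in>Pow I.
      shuffle_sign I (K - I) * (shuffle_sign J (I - J) * a J * b (I - J)) * c (K - I))"
    unfolding wedge_def by (simp add: sum_distrib_left sum_distrib_right)
  also have "\<dots> = (\<Sum>(I, J)\<in>Sigma (Pow K) Pow.
      shuffle_sign I (K - I) * (shuffle_sign J (I - J) * a J * b (I - J)) * c (K - I))"
    by (rule sum.Sigma) (use K in \<open>auto intro: finite_subset\<close>)
  also have "\<dots> = (\<Sum>(J, L)\<in>Sigma (Pow K) (\<lambda>J. Pow (K - J)).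
      shuffle_sign J (K - J) * a J * (shuffle_sign L (K - J - L) * b L * c (K - J - L)))"
  proof (rule sum.reindex_bij_witness[where i="\<lambda>(J, L). (J \<union> L, J)" and j="\<lambda>(I, J). (J, I - J)"])
    fix x assume "x \<in> Sigma (Pow K) Pow"
    then obtain I J where x: "x = (I, J)" "I \<subseteq> K" "J \<subseteq> I" by auto
    define L where "L = I - J"
    have IJL: "I = J \<union> L" "J \<inter> L = {}" "L \<subseteq> K - J" using x by (auto simp: L_def)
    have "finite J" "finite L" "finite (K - J - L)"
      using x IJL K by (auto intro: finite_subset)
    then have "shuffle_sign (J \<union> L) (K - J - L) * shuffle_sign J L =
        shuffle_sign J (L \<union> (K - J - L)) * shuffle_sign L (K - J - L)"
      by (rule shuffle_sign_assoc) (use IJL in auto)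
    moreover have "K - (J \<union> L) = K - J - L" "J \<union> L - J = L" "L \<union> (K - J - L) = K - J"
      using IJL x by auto
    ultimately show "(case case x of (I, J) \<Rightarrow> (J, I - J) of (J, L) \<Rightarrow>
          shuffle_sign J (K - J) * a J * (shuffle_sign L (K - J - L) * b L * c (K - J - L))) =
        (case x of (I, J) \<Rightarrow> shuffle_sign I (K - I) * (shuffle_sign J (I - J) * a J * b (I - J)) * c (K - I))"
      unfolding x(1) IJL(1) by (simp add: L_def[symmetric] algebra_simps)
  qed auto
  also have "\<dots> = (\<Sum>J\<in>Pow K. \<Sum>L\<in>Pow (K - J).
      shuffle_sign J (K - J) * a J * (shuffle_sign L (K - J - L) * b L * c (K - J - L)))"
    by (rule sum.Sigma[symmetric]) (use K in \<open>auto intro: finite_subset\<close>)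
  also have "\<dots> = wedge a (wedge b c) K"
    unfolding wedge_def by (simp add: sum_distrib_left)
  finally show ?thesis .
qed

lemma wedge_one_left: "finite K \<Longrightarrow> wedge form_one b K = b K"
proof -
  assume K: "finite K"
  have "wedge form_one b K = (\<Sum>I\<in>Pow K. if I = {} then b K else 0)"
    unfolding wedge_def form_one_def by (rule sum.cong) auto
  also have "\<dots> = b K" using K by (simp add: sum.delta')
  finally show ?thesis .
qed

lemma wedge_one_right: "finite K \<Longrightarrow> wedge a form_one K = a K"
proof -
  assume K: "finite K"
  have "wedge a form_one K = (\<Sum>I\<in>Pow K. if I = K then a K else 0)"
    unfolding wedge_def form_one_def by (rule sum.cong) auto
  also have "\<dots> = a K" using K by (simp add: sum.delta')
  finally show ?thesis .
qed

lemma wedge_cong: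
  assumes "form_eq a a'" "form_eq b b'" "finite K"
  shows "wedge a b K = wedge a' b' K"
  unfolding wedge_def
proof (rule sum.cong[OF refl])
  fix I assume "I \<in> Pow K"
  then have "finite I" "finite (K - I)" using assms(3) finite_subset by auto
  then show "shuffle_sign I (K - I) * a I * b (K - I) = shuffle_sign I (K - I) * a' I * b' (K - I)"
    using assms(1,2) by (simp add: form_eq_def)
qed

lemma form_eq_wedge: "form_eq a a' \<Longrightarrow> form_eq b b' \<Longrightarrow> form_eq (wedge a b) (wedge a' b')"
  unfolding form_eq_def[of "wedge _ _"] using wedge_cong by blast

lemma wedge_sum_left:
  "wedge (\<lambda>K. \<Sum>x\<in>A. c x * u x K) b K = (\<Sum>x\<in>A. c x * wedge (u x) b K)"
  unfolding wedge_def
  by (simp add: sum_distrib_left sum_distrib_right algebra_simps sum.swap[where A=A])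

lemma wedge_sum_right:
  "wedge a (\<lambda>K. \<Sum>x\<in>A. c x * u x K) K = (\<Sum>x\<in>A. c x * wedge a (u x) K)"
  unfolding wedge_def
  by (simp add: sum_distrib_left sum_distrib_right algebra_simps sum.swap[where A=A])

lemma wedge_sum_left': "wedge (\<lambda>K. \<Sum>x\<in>A. u x K) b K = (\<Sum>x\<in>A. wedge (u x) b K)"
  using wedge_sum_left[where c="\<lambda>_. 1"] by simp

lemma wedge_sum_right': "wedge a (\<lambda>K. \<Sum>x\<in>A. u x K) K = (\<Sum>x\<in>A. wedge a (u x) K)"
  using wedge_sum_right[where c="\<lambda>_. 1"] by simp

definition wedge_list :: "form list \<Rightarrow> form" where
  "wedge_list xs = foldl wedge form_one xs"

lemma wedge_list_Nil [simp]: "wedge_list [] = form_one"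
  by (simp add: wedge_list_def)

lemma wedge_list_snoc [simp]: "wedge_list (xs @ [x]) = wedge (wedge_list xs) x"
  by (simp add: wedge_list_def)

lemma wedge_list_append: "finite K \<Longrightarrow> wedge (wedge_list xs) (wedge_list ys) K = wedge_list (xs @ ys) K"
proof (induction ys arbitrary: K rule: rev_induct)
  case Nil
  then show ?case by (simp add: wedge_one_right)
next
  case (snoc y ys)
  have "wedge (wedge_list xs) (wedge_list (ys @ [y])) K = wedge (wedge (wedge_list xs) (wedge_list ys)) y K"
    using snoc.prems by (simp add: wedge_assoc)
  also have "\<dots> = wedge (wedge_list (xs @ ys)) y K"
    by (rule wedge_cong) (use snoc in \<open>auto simp: form_eq_def\<close>)
  finally show ?case by (metis append_assoc wedge_list_snoc)
qed

lemma form_eq_wedge_list_pair: "form_eq (wedge a b) (wedge_list [a, b])"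
proof -
  have "form_eq (wedge a b) (wedge (wedge form_one a) b)"
    by (rule form_eq_wedge) (auto simp: form_eq_def wedge_one_left)
  then show ?thesis by (simp add: wedge_list_def)
qed

lemma bigwedge_eq_wedge_list:
  assumes "\<And>l. l < k \<Longrightarrow> form_eq (F l) (wedge_list (P l))"
  shows "form_eq (bigwedge F k) (wedge_list (concat (map P [0..<k])))"
  using assms
proof (induction k)
  case (Suc k)
  have "form_eq (bigwedge F (Suc k)) (wedge (wedge_list (concat (map P [0..<k]))) (wedge_list (P k)))"
    using form_eq_wedge[OF Suc.IH Suc.prems[of k]] Suc.prems by simp
  then show ?case by (simp add: form_eq_def wedge_list_append)
qed simp

lemma finite_lists_length_subset_lessThan: "finite {t. length t = q \<and> set t \<subseteq> {..<N::nat}}"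
  using finite_lists_length_eq[OF finite_lessThan[of N], of q] by (simp add: conj_commute)

lemma wedge_pow_sum:
  fixes N :: nat
  assumes P: "form_eq P (\<lambda>K. \<Sum>\<mu><N. wedge_list (B \<mu>) K)"
  shows "form_eq (wedge_pow P q)
           (\<lambda>K. \<Sum>t\<in>{t. length t = q \<and> set t \<subseteq> {..<N}}. wedge_list (concat (map B t)) K)"
proof (induction q)
  case 0
  have "{t. length t = 0 \<and> set t \<subseteq> {..<N}} = {[]}" by auto
  then show ?case by (simp add: form_eq_def)
next
  case (Suc q)
  let ?T = "\<lambda>q. {t. length t = q \<and> set t \<subseteq> {..<N}}"
  show ?case unfolding form_eq_def
  proof (intro allI impI)
    fix K :: "nat set" assume K: "finite K"
    have "wedge_pow P (Suc q) K =
        wedge (\<lambda>K. \<Sum>\<mu><N. wedge_list (B \<mu>) K) (\<lambda>K. \<Sum>t\<in>?T q. wedge_list (concat (map B t)) K) K"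
      using wedge_cong[OF P Suc K] by simp
    also have "\<dots> = (\<Sum>\<mu><N. \<Sum>t\<in>?T q. wedge_list (concat (map B (\<mu> # t))) K)"
      using K by (simp add: wedge_sum_left' wedge_sum_right' wedge_list_append)
    also have "\<dots> = (\<Sum>(\<mu>, t)\<in>{..<N} \<times> ?T q. wedge_list (concat (map B (\<mu> # t))) K)"
      by (rule sum.cartesian_product)
    also have "\<dots> = (\<Sum>t\<in>?T (Suc q). wedge_list (concat (map B t)) K)"
    proof (rule sum.reindex_bij_witness[where i="\<lambda>t. (hd t, tl t)" and j="\<lambda>(\<mu>, t). \<mu> # t"])
      fix t assume "t \<in> ?T (Suc q)"
      then show "(case (hd t, tl t) of (\<mu>, t) \<Rightarrow> \<mu> # t) = t" "(hd t, tl t) \<in> {..<N} \<times> ?T q"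
        by (cases t; auto)+
    qed auto
    finally show "wedge_pow P (Suc q) K = (\<Sum>t\<in>?T (Suc q). wedge_list (concat (map B t)) K)" .
  qed
qed

lemma sum_lists_symmetric:
  fixes g :: "nat list \<Rightarrow> 'a::comm_semiring_1"
  assumes repeated: "\<And>t. length t = q \<Longrightarrow> set t \<subseteq> {..<N} \<Longrightarrow> \<not> distinct t \<Longrightarrow> g t = 0"
    and symmetric: "\<And>t. length t = q \<Longrightarrow> set t \<subseteq> {..<N} \<Longrightarrow> distinct t \<Longrightarrow>
        g t = g (sorted_list_of_set (set t))"
  shows "(\<Sum>t\<in>{t. length t = q \<and> set t \<subseteq> {..<N}}. g t)
       = of_nat (fact q) * (\<Sum>S\<in>{S. S \<subseteq> {..<N} \<and> card S = q}. g (sorted_list_of_set S))"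
proof -
  let ?SS = "{S. S \<subseteq> {..<N} \<and> card S = q}"
  have "(\<Sum>t\<in>{t. length t = q \<and> set t \<subseteq> {..<N}}. g t) =
      (\<Sum>t\<in>{t. length t = q \<and> set t \<subseteq> {..<N} \<and> distinct t}. g t)"
    by (rule sum.mono_neutral_right) (use finite_lists_length_subset_lessThan repeated in auto)
  also have "{t. length t = q \<and> set t \<subseteq> {..<N} \<and> distinct t} = (\<Union>S\<in>?SS. permutations_of_set S)"
    by (auto simp: permutations_of_set_def distinct_card)
  also have "(\<Sum>t\<in>(\<Union>S\<in>?SS. permutations_of_set S). g t) = (\<Sum>S\<in>?SS. \<Sum>t\<in>permutations_of_set S. g t)"
  proof (rule sum.UNION_disjoint)
    show "finite ?SS" by (rule finite_subset[of _ "Pow {..<N}"]) auto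
    show "\<forall>S\<in>?SS. finite (permutations_of_set S)" by simp
  qed (auto simp: permutations_of_set_def)
  also have "\<dots> = (\<Sum>S\<in>?SS. of_nat (fact q) * g (sorted_list_of_set S))"
  proof (rule sum.cong[OF refl])
    fix S assume S: "S \<in> ?SS"
    have "(\<Sum>t\<in>permutations_of_set S. g t) = (\<Sum>t\<in>permutations_of_set S. g (sorted_list_of_set S))"
    proof (rule sum.cong[OF refl])
      fix t assume "t \<in> permutations_of_set S"
      then have t: "set t = S" "distinct t" by (auto simp: permutations_of_set_def)
      then show "g t = g (sorted_list_of_set S)"
        using symmetric[of t] S distinct_card[OF t(2)] by auto
    qed
    also have "\<dots> = of_nat (fact q) * g (sorted_list_of_set S)"
      using S finite_subset[of S "{..<N}"] by simp
    finally show "(\<Sum>t\<in>permutations_of_set S. g t) = of_nat (fact q) * g (sorted_list_of_set S)" .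
  qed
  finally show ?thesis by (simp add: sum_distrib_left)
qed

section \<open>Wedge products of one-forms and determinants\<close>

definition one_form :: "(nat \<Rightarrow> complex) \<Rightarrow> form" where
  "one_form c K = (if card K = 1 then c (the_elem K) else 0)"

lemma wedge_one_form_right:
  assumes K: "finite K"
  shows "wedge W (one_form c) K = (\<Sum>x\<in>K. shuffle_sign (K - {x}) {x} * W (K - {x}) * c x)"
proof -
  let ?g = "\<lambda>I. shuffle_sign I (K - I) * W I * one_form c (K - I)"
  have "wedge W (one_form c) K = sum ?g (Pow K)" unfolding wedge_def ..
  also have "\<dots> = sum ?g ((\<lambda>x. K - {x}) ` K)"
  proof (rule sum.mono_neutral_right)
    show "finite (Pow K)" using K by simp
    show "(\<lambda>x. K - {x}) ` K \<subseteq> Pow K" by auto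
    show "\<forall>I\<in>Pow K - (\<lambda>x. K - {x}) ` K. ?g I = 0"
    proof
      fix I assume I: "I \<in> Pow K - (\<lambda>x. K - {x}) ` K"
      have "card (K - I) \<noteq> 1"
      proof
        assume "card (K - I) = 1"
        then obtain x where x: "K - I = {x}" by (auto simp: card_Suc_eq)
        then have "I = K - {x}" "x \<in> K" using I by auto
        then show False using I by auto
      qed
      then show "?g I = 0" by (simp add: one_form_def)
    qed
  qed
  also have "\<dots> = sum (?g \<circ> (\<lambda>x. K - {x})) K"
    by (rule sum.reindex) (auto simp: inj_on_def)
  also have "\<dots> = (\<Sum>x\<in>K. shuffle_sign (K - {x}) {x} * W (K - {x}) * c x)"
  proof (rule sum.cong[OF refl])
    fix x assume x: "x \<in> K"
    then have e: "K - (K - {x}) = {x}" by auto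
    show "(?g \<circ> (\<lambda>x. K - {x})) x = shuffle_sign (K - {x}) {x} * W (K - {x}) * c x"
      by (simp add: e one_form_def)
  qed
  finally show ?thesis .
qed

lemma shuffle_sign_singleton:
  assumes "finite K" "x \<in> K"
  shows "shuffle_sign (K - {x}) {x} = (-1) ^ card {i\<in>K. x < i}"
proof -
  have "{(i, j). i \<in> K - {x} \<and> j \<in> {x} \<and> j < i} = (\<lambda>i. (i, x)) ` {i\<in>K. x < i}" by auto
  moreover have "card ((\<lambda>i. (i, x)) ` {i\<in>K. x < i}) = card {i\<in>K. x < i}"
    by (rule card_image) (auto simp: inj_on_def)
  ultimately show ?thesis unfolding shuffle_sign_def by simp
qed

lemma card_greater_sorted_nth:
  assumes K: "finite K" and j: "j < card K"
  shows "card {i\<in>K. sorted_list_of_set K ! j < i} = card K - Suc j"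
proof -
  let ?xs = "sorted_list_of_set K"
  have sw: "sorted_wrt (<) ?xs" by (rule strict_sorted_list_of_set)
  have len: "length ?xs = card K" using K by simp
  have dist: "distinct ?xs" by simp
  have "{i\<in>K. ?xs ! j < i} = set (drop (Suc j) ?xs)"
  proof (intro equalityI subsetI)
    fix i assume "i \<in> {i\<in>K. ?xs ! j < i}"
    then have i: "i \<in> set ?xs" "?xs ! j < i" using K by auto
    then obtain t where t: "t < length ?xs" "i = ?xs ! t" by (auto simp: in_set_conv_nth)
    have "j < t"
    proof (rule ccontr)
      assume "\<not> j < t"
      then have "t \<le> j" by simp
      then have "?xs ! t \<le> ?xs ! j"
        using sorted_wrt_nth_less[OF sw, of t j] j len by (cases "t = j") auto
      then show False using i t by simp
    qed
    then show "i \<in> set (drop (Suc j) ?xs)" using t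
      by (auto simp: in_set_conv_nth intro!: exI[where x="t - Suc j"])
  next
    fix i assume "i \<in> set (drop (Suc j) ?xs)"
    then obtain t where t: "t < length ?xs - Suc j" "i = ?xs ! (Suc j + t)"
      by (auto simp: in_set_conv_nth)
    then have "?xs ! j < i" using sorted_wrt_nth_less[OF sw, of j "Suc j + t"] by auto
    moreover have "i \<in> K" using t K by (metis add.commute less_diff_conv nth_mem set_sorted_list_of_set)
    ultimately show "i \<in> {i\<in>K. ?xs ! j < i}" by simp
  qed
  then show ?thesis using dist len by (simp add: distinct_card)
qed

lemma sorted_list_of_set_remove_nth:
  assumes K: "finite K" and j: "j < card K" and j': "j' < card K - 1"
  shows "sorted_list_of_set (K - {sorted_list_of_set K ! j}) ! j' = sorted_list_of_set K ! (insert_index j j')"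
proof -
  let ?xs = "sorted_list_of_set K"
  have len: "length ?xs = card K" using K by simp
  have dist: "distinct ?xs" by simp
  have "sorted_list_of_set (K - {?xs ! j}) = remove1 (?xs ! j) ?xs"
    using K by (simp add: sorted_list_of_set_remove)
  also have "\<dots> = take j ?xs @ drop (Suc j) ?xs"
  proof -
    have d: "?xs = take j ?xs @ ?xs ! j # drop (Suc j) ?xs" using j len by (simp add: id_take_nth_drop)
    have "distinct (take j ?xs @ ?xs ! j # drop (Suc j) ?xs)" using dist d by metis
    then have "?xs ! j \<notin> set (take j ?xs)" by simp
    then have "remove1 (?xs ! j) (take j ?xs @ ?xs ! j # drop (Suc j) ?xs) = take j ?xs @ drop (Suc j) ?xs"
      by (simp add: remove1_append)
    then show ?thesis using d by metis
  qed
  finally have e: "sorted_list_of_set (K - {?xs ! j}) = take j ?xs @ drop (Suc j) ?xs" .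
  show ?thesis unfolding e using j j' len
    by (auto simp: nth_append insert_index_def min_def)
qed

lemma shuffle_sign_remove_sorted_nth:
  assumes K: "finite K" and j: "j < card K"
  shows "shuffle_sign (K - {sorted_list_of_set K ! j}) {sorted_list_of_set K ! j} = (-1) ^ (card K - 1 + j)"
proof -
  have "sorted_list_of_set K ! j \<in> K"
    using K j by (metis length_sorted_list_of_set nth_mem set_sorted_list_of_set)
  then have "shuffle_sign (K - {sorted_list_of_set K ! j}) {sorted_list_of_set K ! j} = (-1) ^ (card K - Suc j)"
    using shuffle_sign_singleton[OF K] card_greater_sorted_nth[OF K j] by simp
  also have "(-1::complex) ^ (card K - Suc j) = (-1) ^ (card K - Suc j) * ((-1) ^ 2) ^ j"
    by simp
  also have "\<dots> = (-1) ^ (card K - 1 + j)"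
    using j by (simp only: power_mult[symmetric] power_add[symmetric]) (simp add: algebra_simps)
  finally show ?thesis .
qed

lemma mat_delete_sorted_columns:
  assumes K: "finite K" "card K = Suc (length cs)" and j: "j < Suc (length cs)"
  shows "mat_delete (mat (Suc (length cs)) (Suc (length cs)) (\<lambda>(i, j). ((cs @ [c]) ! i) (sorted_list_of_set K ! j)))
      (length cs) j =
    mat (length cs) (length cs) (\<lambda>(i, j'). (cs ! i) (sorted_list_of_set (K - {sorted_list_of_set K ! j}) ! j'))"
proof (rule eq_matI)
  fix i j' assume "i < dim_row (mat (length cs) (length cs)
      (\<lambda>(i, j'). (cs ! i) (sorted_list_of_set (K - {sorted_list_of_set K ! j}) ! j')))"
    "j' < dim_col (mat (length cs) (length cs)
      (\<lambda>(i, j'). (cs ! i) (sorted_list_of_set (K - {sorted_list_of_set K ! j}) ! j')))"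
  then have i: "i < length cs" and j': "j' < length cs" by auto
  have "sorted_list_of_set (K - {sorted_list_of_set K ! j}) ! j' = sorted_list_of_set K ! (insert_index j j')"
    by (rule sorted_list_of_set_remove_nth) (use K j j' in auto)
  moreover have "insert_index j j' < Suc (length cs)" using j j' by (auto simp: insert_index_def)
  ultimately show "mat_delete (mat (Suc (length cs)) (Suc (length cs))
        (\<lambda>(i, j). ((cs @ [c]) ! i) (sorted_list_of_set K ! j))) (length cs) j $$ (i, j') =
      mat (length cs) (length cs) (\<lambda>(i, j'). (cs ! i) (sorted_list_of_set (K - {sorted_list_of_set K ! j}) ! j')) $$ (i, j')"
    using i j' unfolding mat_delete_def by (simp add: nth_append insert_index_def)
qed auto

text \<open>Laplace expansion along the last row matches the expansion of the last wedge factor.\<close>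

lemma wedge_list_one_forms:
  "finite K \<Longrightarrow> card K = length cs \<Longrightarrow> wedge_list (map one_form cs) K =
     det (mat (length cs) (length cs) (\<lambda>(i, j). (cs ! i) (sorted_list_of_set K ! j)))"
proof (induction cs arbitrary: K rule: rev_induct)
  case Nil
  then show ?case by (simp add: form_one_def det_def)
next
  case (snoc c cs)
  let ?l = "length cs"
  let ?xs = "sorted_list_of_set K"
  let ?M = "mat (Suc ?l) (Suc ?l) (\<lambda>(i, j). ((cs @ [c]) ! i) (?xs ! j))"
  have K: "finite K" "card K = Suc ?l" using snoc.prems by auto
  have "wedge_list (map one_form (cs @ [c])) K =
      (\<Sum>x\<in>K. shuffle_sign (K - {x}) {x} * wedge_list (map one_form cs) (K - {x}) * c x)"
    using K by (simp add: wedge_one_form_right)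
  also have "\<dots> = (\<Sum>j<Suc ?l. shuffle_sign (K - {?xs ! j}) {?xs ! j} *
      wedge_list (map one_form cs) (K - {?xs ! j}) * c (?xs ! j))"
    by (rule sum.reindex_bij_betw[symmetric], rule bij_betw_nth) (use K in auto)
  also have "\<dots> = (\<Sum>j<Suc ?l. ?M $$ (?l, j) * cofactor ?M ?l j)"
  proof (rule sum.cong[OF refl])
    fix j assume "j \<in> {..<Suc ?l}"
    then have j: "j < Suc ?l" by simp
    then have "card (K - {?xs ! j}) = ?l"
      using K by (metis card_Diff_singleton diff_Suc_1 length_sorted_list_of_set nth_mem set_sorted_list_of_set)
    then have "wedge_list (map one_form cs) (K - {?xs ! j}) =
        det (mat ?l ?l (\<lambda>(i, j'). (cs ! i) (sorted_list_of_set (K - {?xs ! j}) ! j')))"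
      using snoc.IH[of "K - {?xs ! j}"] K by simp
    then show "shuffle_sign (K - {?xs ! j}) {?xs ! j} * wedge_list (map one_form cs) (K - {?xs ! j}) *
        c (?xs ! j) = ?M $$ (?l, j) * cofactor ?M ?l j"
      using j K shuffle_sign_remove_sorted_nth[OF K(1), of j]
      unfolding cofactor_def mat_delete_sorted_columns[OF K j] by (simp add: nth_append)
  qed
  also have "\<dots> = det ?M"
    by (rule laplace_expansion_row[symmetric]) auto
  finally show ?case by simp
qed

definition det_rows :: "nat \<Rightarrow> (nat \<Rightarrow> complex) list \<Rightarrow> complex" where
  "det_rows m as = det (mat m m (\<lambda>(i, j). (as ! i) j))"

lemma detn_eq_det_rows: "detn m A = det_rows m (map A [0..<m])"
proof -
  have "det_rows m (map A [0..<m]) = (\<Sum>p | p permutes {0..<m}. signof p * (\<Prod>i=0..<m. A i (p i)))"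
    unfolding det_rows_def
    by (subst det_def'[of _ m])
       (auto intro!: sum.cong prod.cong simp: permutes_in_image[of _ "{0..<m}", simplified])
  then show ?thesis
    unfolding detn_def by (simp add: lessThan_atLeast0)
qed

lemma det_rows_cong:
  assumes "\<And>i j. i < m \<Longrightarrow> j < m \<Longrightarrow> (as ! i) j = (bs ! i) j"
  shows "det_rows m as = det_rows m bs"
  unfolding det_rows_def using assms by (intro arg_cong[where f=det] eq_matI) auto

lemma det_rows_repeated_row:
  assumes "i < m" "j < m" "i \<noteq> j" "as ! i = as ! j"
  shows "det_rows m as = 0"
  unfolding det_rows_def by (rule det_identical_rows[of _ m i j]) (use assms in auto)

lemma cmod_det_rows_mset:
  assumes "mset as = mset bs" "length bs = m"
  shows "cmod (det_rows m as) = cmod (det_rows m bs)"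
proof -
  obtain \<pi> where \<pi>: "\<pi> permutes {..<length bs}" "permute_list \<pi> bs = as"
    using mset_eq_permutation[OF assms(1)] by blast
  have \<pi>m: "\<pi> permutes {0..<m}" using \<pi>(1) assms(2) by (simp add: lessThan_atLeast0)
  have "\<pi> i < m" if "i < m" for i
    using permutes_in_image[OF \<pi>m, of i] that by simp
  then have "det_rows m as = det (mat m m (\<lambda>(i, j). mat m m (\<lambda>(i, j). (bs ! i) j) $$ (\<pi> i, j)))"
    unfolding det_rows_def \<pi>(2)[symmetric] using \<pi> assms(2)
    by (intro arg_cong[where f=det] eq_matI) (auto simp: permute_list_nth)
  also have "\<dots> = signof \<pi> * det_rows m bs"
    unfolding det_rows_def by (rule det_permute_rows[OF _ \<pi>m]) simp
  finally show ?thesis by (simp add: norm_mult sign_def)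
qed

lemma det_rows_snoc:
  assumes "length R = n"
  shows "det_rows (Suc n) (R @ [v]) =
    (\<Sum>p | p permutes {0..<Suc n}. signof p * (\<Prod>i<n. (R ! i) (p i)) * v (p n))"
  unfolding det_rows_def using assms
  by (subst det_def'[of _ "Suc n"])
     (auto intro!: sum.cong prod.cong simp: prod.atLeast0_lessThan_Suc lessThan_atLeast0 nth_append
       permutes_in_image[of _ "{0..<Suc n}", simplified])

lemma det_rows_snoc_linear:
  assumes "length R = n" "finite S"
  shows "det_rows (Suc n) (R @ [\<lambda>j. a j + (\<Sum>\<mu>\<in>S. c \<mu> * b \<mu> j)]) =
    det_rows (Suc n) (R @ [a]) + (\<Sum>\<mu>\<in>S. c \<mu> * det_rows (Suc n) (R @ [b \<mu>]))"
  unfolding det_rows_snoc[OF assms(1)]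
  by (simp add: algebra_simps sum.distrib sum_distrib_left sum_distrib_right sum.swap[where A=S])

lemma det_rows_snoc_unit:
  assumes R: "length R = n"
  shows "det_rows (Suc n) (R @ [\<lambda>j. if j = n then 1 else 0]) = det_rows n R"
proof -
  let ?A = "mat (Suc n) (Suc n) (\<lambda>(i,j). ((R @ [\<lambda>j. if j = n then 1 else 0]) ! i) j)"
  have "det ?A = (\<Sum>j<Suc n. ?A $$ (n, j) * cofactor ?A n j)"
    by (rule laplace_expansion_row) auto
  also have "\<dots> = (\<Sum>j<Suc n. if j = n then cofactor ?A n n else 0)"
    by (rule sum.cong[OF refl]) (use R in \<open>auto simp: nth_append\<close>)
  also have "\<dots> = cofactor ?A n n" by simp
  also have "\<dots> = det (mat_delete ?A n n)"
    by (simp add: cofactor_def flip: mult_2)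
  also have "mat_delete ?A n n = mat n n (\<lambda>(i,j). (R ! i) j)"
    by (rule eq_matI) (use R in \<open>auto simp: mat_delete_def nth_append\<close>)
  finally show ?thesis unfolding det_rows_def by simp
qed

definition dz_coeff :: "nat \<Rightarrow> (nat \<Rightarrow> complex) \<Rightarrow> nat \<Rightarrow> complex" where
  "dz_coeff m a t = (if t < m then a t else 0)"

definition dzbar_coeff :: "nat \<Rightarrow> (nat \<Rightarrow> complex) \<Rightarrow> nat \<Rightarrow> complex" where
  "dzbar_coeff m a t = (if m \<le> t \<and> t < 2 * m then cnj (a (t - m)) else 0)"

definition conj_pair_forms :: "nat \<Rightarrow> (nat \<Rightarrow> complex) \<Rightarrow> form list" where
  "conj_pair_forms m a = [one_form (dz_coeff m a), one_form (dzbar_coeff m a)]"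

definition interleave :: "nat \<Rightarrow> nat \<Rightarrow> nat" where
  "interleave m i = (if i < m then 2 * i else if i < 2 * m then 2 * (i - m) + 1 else i)"

lemma concat_pair_len: "length (concat (map (\<lambda>a. [f a, g a]) as)) = 2 * length as"
  by (induction as) auto

lemma concat_pair_nth:
  "i < length as \<Longrightarrow> concat (map (\<lambda>a. [f a, g a]) as) ! (2 * i) = f (as ! i) \<and>
     concat (map (\<lambda>a. [f a, g a]) as) ! (Suc (2 * i)) = g (as ! i)"
proof (induction as arbitrary: i)
  case Nil then show ?case by simp
next
  case (Cons a as)
  show ?case
  proof (cases i)
    case 0 then show ?thesis by simp
  next
    case (Suc i')
    then have "2 * i = Suc (Suc (2 * i'))" by simp
    then show ?thesis using Cons Suc by simp
  qed
qed

lemma interleave_permutes: "interleave m permutes {0..<2 * m}"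
proof (rule bij_imp_permutes)
  have par: "2 * x \<noteq> Suc (2 * z)" for x z :: nat by presburger
  have inj: "inj_on (interleave m) {0..<2 * m}"
  proof (rule inj_onI)
    fix x y assume x: "x \<in> {0..<2 * m}" and y: "y \<in> {0..<2 * m}" and e: "interleave m x = interleave m y"
    show "x = y"
    proof (cases "x < m")
      case True
      then show ?thesis using e x y par[of x "y - m"] unfolding interleave_def by (auto split: if_splits)
    next
      case False
      then show ?thesis using e x y par[of y "x - m"] unfolding interleave_def by (auto split: if_splits)
    qed
  qed
  have sub: "interleave m ` {0..<2 * m} \<subseteq> {0..<2 * m}"
    unfolding interleave_def by auto
  show "bij_betw (interleave m) {0..<2 * m} {0..<2 * m}"
    unfolding bij_betw_def using inj endo_inj_surj[OF _ sub inj] by auto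
  show "\<And>x. x \<notin> {0..<2 * m} \<Longrightarrow> interleave m x = x" unfolding interleave_def by auto
qed

lemma det_mat_cnj: "det (mat m m (\<lambda>(i, j). cnj (f i j))) = cnj (det (mat m m (\<lambda>(i, j). f i j)))"
  by (simp add: det_def'[of _ m] cnj_sum cnj_prod)

text \<open>Moving the rows of the conjugate forms behind those of the holomorphic ones makes the
  coefficient matrix block diagonal, with diagonal blocks \<open>A\<close> and \<open>conj A\<close>.\<close>

lemma wedge_list_conj_pairs:
  assumes m: "length as = m"
  shows "wedge_list (concat (map (conj_pair_forms m) as)) {..<2 * m}
       = signof (interleave m) * complex_of_real (cmod (det_rows m as) ^ 2)"
proof -
  let ?cs = "concat (map (\<lambda>a. [dz_coeff m a, dzbar_coeff m a]) as)"
  let ?M = "mat (2 * m) (2 * m) (\<lambda>(i, j). (?cs ! i) j)"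
  let ?A = "mat m m (\<lambda>(i, j). (as ! i) j)"
  let ?Ab = "mat m m (\<lambda>(i, j). cnj ((as ! i) j))"
  have lcs: "length ?cs = 2 * m" using m by (simp add: concat_pair_len)
  have "concat (map (conj_pair_forms m) as) = map one_form ?cs"
    by (simp add: conj_pair_forms_def[abs_def] map_concat o_def)
  moreover have "sorted_list_of_set {..<2 * m} = [0..<2 * m]"
    by (simp add: lessThan_atLeast0)
  ultimately have "wedge_list (concat (map (conj_pair_forms m) as)) {..<2 * m} =
      det (mat (2 * m) (2 * m) (\<lambda>(i, j). (?cs ! i) ([0..<2 * m] ! j)))"
    using wedge_list_one_forms[of "{..<2 * m}" ?cs] lcs by simp
  also have "\<dots> = det ?M"
    by (intro arg_cong[where f=det] eq_matI) auto
  finally have M: "wedge_list (concat (map (conj_pair_forms m) as)) {..<2 * m} = det ?M" .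
  have "mat (2 * m) (2 * m) (\<lambda>(i, j). ?M $$ (interleave m i, j)) = four_block_mat ?A (0\<^sub>m m m) (0\<^sub>m m m) ?Ab"
  proof (rule eq_matI)
    fix i j assume "i < dim_row (four_block_mat ?A (0\<^sub>m m m) (0\<^sub>m m m) ?Ab)"
      "j < dim_col (four_block_mat ?A (0\<^sub>m m m) (0\<^sub>m m m) ?Ab)"
    then have ij: "i < 2 * m" "j < 2 * m" by auto
    have bi: "interleave m i < 2 * m" using ij unfolding interleave_def by auto
    show "mat (2 * m) (2 * m) (\<lambda>(i, j). ?M $$ (interleave m i, j)) $$ (i, j) =
        four_block_mat ?A (0\<^sub>m m m) (0\<^sub>m m m) ?Ab $$ (i, j)"
    proof (cases "i < m")
      case True
      have "?cs ! (2 * i) = dz_coeff m (as ! i)"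
        using concat_pair_nth[of i as "dz_coeff m" "dzbar_coeff m"] True m by auto
      then show ?thesis using ij bi True by (simp add: interleave_def dz_coeff_def)
    next
      case False
      have "?cs ! (Suc (2 * (i - m))) = dzbar_coeff m (as ! (i - m))"
        using concat_pair_nth[of "i - m" as "dz_coeff m" "dzbar_coeff m"] False ij m by auto
      then show ?thesis using ij bi False by (simp add: interleave_def dzbar_coeff_def)
    qed
  qed auto
  then have "signof (interleave m) * det ?M = det ?A * det ?Ab"
    using det_permute_rows[OF _ interleave_permutes, of ?M m]
    by (simp add: det_four_block_mat_lower_left_zero[of _ m _ m])
  also have "\<dots> = complex_of_real (cmod (det_rows m as) ^ 2)"
    by (simp only: det_mat_cnj det_rows_def complex_norm_square)
  finally have "signof (interleave m) * det ?M = complex_of_real (cmod (det_rows m as) ^ 2)" .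
  moreover have "(signof (interleave m) :: complex) * signof (interleave m) = 1"
    by (simp add: sign_def)
  ultimately show ?thesis
    by (metis M mult.assoc mult_1)
qed

text \<open>Lists with a repeated index produce two equal rows; lists with the same set of indices
  differ by a row permutation, which does not change \<open>|det|\<close>.\<close>

lemma sum_lists_cmod_det_rows:
  fixes u :: "nat \<Rightarrow> complex" and b :: "nat \<Rightarrow> nat \<Rightarrow> complex"
  assumes m: "m = Suc (q + length R)"
  shows "(\<Sum>t\<in>{t. length t = q \<and> set t \<subseteq> {..<N}}. cmod (det_rows m (u # map b t @ R)) ^ 2) =
    fact q * (\<Sum>S\<in>{S. S \<subseteq> {..<N} \<and> card S = q}. cmod (det_rows m (map b (sorted_list_of_set S) @ R @ [u])) ^ 2)"
proof -
  define g where "g t = cmod (det_rows m (u # map b t @ R)) ^ 2" for t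
  have "(\<Sum>t\<in>{t. length t = q \<and> set t \<subseteq> {..<N}}. g t) =
      of_nat (fact q) * (\<Sum>S\<in>{S. S \<subseteq> {..<N} \<and> card S = q}. g (sorted_list_of_set S))"
  proof (rule sum_lists_symmetric)
    fix t :: "nat list" assume t: "length t = q" "\<not> distinct t"
    then obtain i j where ij: "i < q" "j < q" "i \<noteq> j" "t ! i = t ! j"
      by (auto simp: distinct_conv_nth)
    have "(u # map b t @ R) ! Suc i = (u # map b t @ R) ! Suc j"
      using ij t by (simp add: nth_append)
    then have "det_rows m (u # map b t @ R) = 0"
      by (rule det_rows_repeated_row[rotated 3]) (use ij m in auto)
    then show "g t = 0" by (simp add: g_def)
  next
    fix t :: "nat list" assume t: "length t = q" "distinct t"
    have "mset (sorted_list_of_set (set t)) = mset t"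
      using t(2) by (subst set_eq_iff_mset_eq_distinct[symmetric]) simp_all
    then have "mset (u # map b t @ R) = mset (u # map b (sorted_list_of_set (set t)) @ R)"
      by simp
    moreover have "length (u # map b (sorted_list_of_set (set t)) @ R) = m"
      using t m by (simp add: distinct_card)
    ultimately have "cmod (det_rows m (u # map b t @ R)) =
        cmod (det_rows m (u # map b (sorted_list_of_set (set t)) @ R))"
      by (rule cmod_det_rows_mset)
    then show "g t = g (sorted_list_of_set (set t))"
      by (simp add: g_def)
  qed
  also have "(\<Sum>S\<in>{S. S \<subseteq> {..<N} \<and> card S = q}. g (sorted_list_of_set S)) =
      (\<Sum>S\<in>{S. S \<subseteq> {..<N} \<and> card S = q}. cmod (det_rows m (map b (sorted_list_of_set S) @ R @ [u])) ^ 2)"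
  proof (rule sum.cong[OF refl])
    fix S assume "S \<in> {S. S \<subseteq> {..<N} \<and> card S = q}"
    then have "finite S" "card S = q" using finite_subset[of S "{..<N}"] by auto
    then show "g (sorted_list_of_set S) = cmod (det_rows m (map b (sorted_list_of_set S) @ R @ [u])) ^ 2"
      unfolding g_def using m by (intro arg_cong[where f="\<lambda>x. x ^ 2"] cmod_det_rows_mset) auto
  qed
  finally show ?thesis by (simp add: g_def)
qed

lemma top_coeff_conj_pairs:
  fixes u :: "nat \<Rightarrow> complex" and b c :: "nat \<Rightarrow> nat \<Rightarrow> complex"
  assumes m: "m = Suc (q + k)"
    and A: "form_eq A (wedge_list (conj_pair_forms m u))"
    and P: "form_eq P (\<lambda>K. \<Sum>\<mu><N. wedge_list (conj_pair_forms m (b \<mu>)) K)"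
    and F: "\<And>l. l < k \<Longrightarrow> form_eq (F l) (wedge_list (conj_pair_forms m (c l)))"
  shows "wedge (wedge A (wedge_pow P q)) (bigwedge F k) {..<2 * m} =
    signof (interleave m) * of_nat (fact q) * complex_of_real
      (\<Sum>S\<in>{S. S \<subseteq> {..<N} \<and> card S = q}.
         cmod (det_rows m (map b (sorted_list_of_set S) @ map c [0..<k] @ [u])) ^ 2)"
proof -
  let ?T = "{t. length t = q \<and> set t \<subseteq> {..<N}}"
  let ?pairs = "\<lambda>as. wedge_list (concat (map (conj_pair_forms m) as))"
  have Pq: "form_eq (wedge A (wedge_pow P q)) (\<lambda>K. \<Sum>t\<in>?T. ?pairs (u # map b t) K)"
    using form_eq_wedge[OF A wedge_pow_sum[OF P]]
    by (simp add: form_eq_def wedge_sum_right' wedge_list_append o_def)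
  have "wedge (wedge A (wedge_pow P q)) (bigwedge F k) {..<2 * m} =
      (\<Sum>t\<in>?T. wedge (?pairs (u # map b t)) (?pairs (map c [0..<k])) {..<2 * m})"
    using wedge_cong[OF Pq bigwedge_eq_wedge_list[of k F "\<lambda>l. conj_pair_forms m (c l)", OF F] finite_lessThan]
    by (simp add: wedge_sum_left' o_def)
  also have "\<dots> = (\<Sum>t\<in>?T. ?pairs (u # map b t @ map c [0..<k]) {..<2 * m})"
    by (simp add: wedge_list_append)
  also have "\<dots> = signof (interleave m) *
      complex_of_real (\<Sum>t\<in>?T. cmod (det_rows m (u # map b t @ map c [0..<k])) ^ 2)"
    unfolding of_real_sum sum_distrib_left
    by (rule sum.cong[OF refl], rule wedge_list_conj_pairs) (use m in simp)
  also have "\<dots> = signof (interleave m) * of_nat (fact q) * complex_of_real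
      (\<Sum>S\<in>{S. S \<subseteq> {..<N} \<and> card S = q}.
         cmod (det_rows m (map b (sorted_list_of_set S) @ map c [0..<k] @ [u])) ^ 2)"
    using sum_lists_cmod_det_rows[where R="map c [0..<k]" and N=N and u=u and b=b] m by simp
  finally show ?thesis .
qed

section \<open>Holomorphic functions of several variables\<close>

lemma norm_vector_smult: "norm (c *s (v :: complex ^ 'm::finite)) = cmod c * norm v"
  unfolding norm_vec_def by (simp add: norm_mult L2_set_right_distrib)

lemma bounded_linear_vector_smult: "bounded_linear (\<lambda>c :: complex. c *s (v :: complex ^ 'm::finite))"
proof (rule bounded_linear_intro[where K="norm v"])
  show "(x + y) *s v = x *s v + y *s v" for x y
    by (simp add: Finite_Cartesian_Product.vec_eq_iff algebra_simps)
  show "(r *\<^sub>R x) *s v = r *\<^sub>R (x *s v)" for r x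
    by (simp add: Finite_Cartesian_Product.vec_eq_iff scaleR_conv_of_real[where 'a=complex])
  show "norm (x *s v) \<le> norm x * norm v" for x
    by (simp add: norm_vector_smult)
qed

lemma holo_on_has_derivative:
  "holo_on U g \<Longrightarrow> y \<in> U \<Longrightarrow> (g has_derivative frechet_derivative g (at y)) (at y)"
  unfolding holo_on_def using frechet_derivative_at by blast

lemma holo_on_frechet_derivative_smult:
  assumes "holo_on U g" "y \<in> U"
  shows "frechet_derivative g (at y) (c *s x) = c * frechet_derivative g (at y) x"
proof -
  obtain L where "(g has_derivative L) (at y)" "\<forall>c x. L (c *s x) = c * L x"
    using assms unfolding holo_on_def by blast
  then show ?thesis using frechet_derivative_at by metis
qed

lemma holo_on_imp_continuous_on: "holo_on U g \<Longrightarrow> continuous_on U g"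
  by (meson continuous_at_imp_continuous_on has_derivative_continuous holo_on_has_derivative)

lemma has_field_derivative_along_line:
  assumes h: "holo_on U g" and z: "y + z *s v \<in> U"
  shows "((\<lambda>z. g (y + z *s v)) has_field_derivative frechet_derivative g (at (y + z *s v)) v) (at z)"
proof -
  have "((\<lambda>z. y + z *s v) has_derivative (\<lambda>c. c *s v)) (at z)"
    using bounded_linear.has_derivative[OF bounded_linear_vector_smult[of v] has_derivative_ident]
    by (auto intro!: derivative_eq_intros)
  from has_derivative_compose[OF this holo_on_has_derivative[OF h z]]
  have "((\<lambda>z. g (y + z *s v)) has_derivative (\<lambda>c. frechet_derivative g (at (y + z *s v)) (c *s v))) (at z)" .
  moreover have "(\<lambda>c. frechet_derivative g (at (y + z *s v)) (c *s v)) = (*) (frechet_derivative g (at (y + z *s v)) v)"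
    using holo_on_frechet_derivative_smult[OF h z] by (auto simp: fun_eq_iff)
  ultimately show ?thesis
    by (simp add: has_field_derivative_def)
qed

lemma norm_circlepath_0: "cmod (circlepath 0 \<rho> t) = \<bar>\<rho>\<bar>"
  by (simp add: circlepath norm_mult)

lemma circlepath_0_nonzero: "\<rho> \<noteq> 0 \<Longrightarrow> circlepath 0 \<rho> t \<noteq> 0"
  by (simp add: circlepath)

lemma continuous_on_circlepath_0 [continuous_intros]:
  "continuous_on S f \<Longrightarrow> continuous_on S (\<lambda>x. circlepath 0 \<rho> (f x))"
  unfolding circlepath by (intro continuous_intros)

lemma frechet_derivative_eq_circle_integral:
  assumes h: "holo_on U g" and \<rho>: "\<rho> > 0" and inU: "\<And>z. cmod z \<le> \<rho> \<Longrightarrow> y + z *s v \<in> U"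
  shows "frechet_derivative g (at y) v = integral {0..1} (\<lambda>t. g (y + circlepath 0 \<rho> t *s v) / circlepath 0 \<rho> t)"
proof -
  let ?\<phi> = "\<lambda>z. g (y + z *s v)"
  have der: "(?\<phi> has_field_derivative frechet_derivative g (at (y + z *s v)) v) (at z)"
    if "cmod z \<le> \<rho>" for z
    by (rule has_field_derivative_along_line[OF h inU[OF that]])
  have "continuous_on (cball 0 \<rho>) ?\<phi>"
    by (rule continuous_at_imp_continuous_on) (use der DERIV_isCont in force)
  moreover have "?\<phi> holomorphic_on ball 0 \<rho>"
    unfolding holomorphic_on_def field_differentiable_def
    using der has_field_derivative_at_within by (metis less_eq_real_def mem_ball_0)
  ultimately have "(?\<phi> has_field_derivative
      (1 / (2 * of_real pi * \<i>) * contour_integral (circlepath 0 \<rho>) (\<lambda>u. ?\<phi> u / (u - 0)^2))) (at 0)"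
    using \<rho> by (intro Cauchy_derivative_integral_circlepath(2)) auto
  then have "frechet_derivative g (at y) v =
      1 / (2 * of_real pi * \<i>) * contour_integral (circlepath 0 \<rho>) (\<lambda>u. ?\<phi> u / (u - 0)^2)"
    using DERIV_unique der[of 0] \<rho> by auto
  also have "contour_integral (circlepath 0 \<rho>) (\<lambda>u. ?\<phi> u / (u - 0)^2)
      = integral {0..1} (\<lambda>t. (2 * of_real pi * \<i>) * (g (y + circlepath 0 \<rho> t *s v) / circlepath 0 \<rho> t))"
    unfolding contour_integral_integral
  proof (rule integral_cong)
    fix t assume "t \<in> {0..1::real}"
    have "vector_derivative (circlepath 0 \<rho>) (at t) = 2 * of_real pi * \<i> * circlepath 0 \<rho> t"
      unfolding vector_derivative_circlepath by (simp add: circlepath)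
    then show "?\<phi> (circlepath 0 \<rho> t) / (circlepath 0 \<rho> t - 0)\<^sup>2 * vector_derivative (circlepath 0 \<rho>) (at t) =
       2 * complex_of_real pi * \<i> * (g (y + circlepath 0 \<rho> t *s v) / circlepath 0 \<rho> t)"
      using circlepath_0_nonzero[of \<rho> t] \<rho> by (simp add: field_simps power2_eq_square)
  qed
  finally show ?thesis by (simp only: integral_mult_right) simp
qed

lemma frechet_derivative_circle_integral:
  fixes g :: "complex ^ 'm::finite \<Rightarrow> complex"
  assumes U: "open U" and h: "holo_on U g" and p: "p \<in> U"
  obtains \<delta> \<rho> where "\<delta> > 0" "\<rho> > 0"
    "\<And>y z. y \<in> ball p \<delta> \<Longrightarrow> cmod z \<le> \<rho> \<Longrightarrow> y + z *s v \<in> U"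
    "\<And>y. y \<in> ball p \<delta> \<Longrightarrow> frechet_derivative g (at y) v
        = integral {0..1} (\<lambda>t. g (y + circlepath 0 \<rho> t *s v) / circlepath 0 \<rho> t)"
proof -
  obtain e where e: "e > 0" "ball p e \<subseteq> U" using U p open_contains_ball by blast
  define \<delta> where "\<delta> = e / 2"
  define \<rho> where "\<rho> = \<delta> / (norm v + 1)"
  have nv: "norm v + 1 > 0" using norm_ge_zero[of v] by linarith
  have dp: "\<delta> > 0" "\<rho> > 0" using e nv by (auto simp: \<delta>_def \<rho>_def)
  have inU: "y + z *s v \<in> U" if y: "y \<in> ball p \<delta>" and z: "cmod z \<le> \<rho>" for y z
  proof -
    have "norm (z *s v) \<le> \<rho> * norm v" using z by (simp add: norm_vector_smult mult_right_mono)
    also have "\<dots> = \<delta> * (norm v / (norm v + 1))" by (simp add: \<rho>_def)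
    also have "\<dots> \<le> \<delta>" using dp(1) by (simp add: pos_divide_le_eq[OF nv] distrib_left)
    finally have "dist p (y + z *s v) < e"
      using y dist_triangle[of p "y + z *s v" y] by (auto simp: \<delta>_def dist_norm norm_minus_commute)
    then show ?thesis using e by auto
  qed
  have "frechet_derivative g (at y) v = integral {0..1} (\<lambda>t. g (y + circlepath 0 \<rho> t *s v) / circlepath 0 \<rho> t)"
    if "y \<in> ball p \<delta>" for y
    by (rule frechet_derivative_eq_circle_integral[OF h dp(2) inU[OF that]])
  with dp inU show ?thesis using that by blast
qed

lemma continuous_on_circle_integrand:
  fixes h :: "complex ^ 'm::finite \<Rightarrow> complex"
  assumes "continuous_on U h" "\<rho> \<noteq> 0"
    and "\<And>y t. y \<in> S \<Longrightarrow> y + circlepath 0 \<rho> t *s v \<in> U"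
  shows "continuous_on (S \<times> cbox 0 (1::real)) (\<lambda>(y, t). h (y + circlepath 0 \<rho> t *s v) / circlepath 0 \<rho> t)"
proof -
  have "continuous_on (S \<times> cbox 0 (1::real)) (\<lambda>z. circlepath 0 \<rho> (snd z) *s v)"
    by (intro bounded_linear.continuous_on[OF bounded_linear_vector_smult] continuous_intros)
  then have "continuous_on (S \<times> cbox 0 (1::real)) (\<lambda>z. h (fst z + circlepath 0 \<rho> (snd z) *s v))"
    by (intro continuous_on_compose2[OF assms(1)] continuous_intros) (use assms(3) in auto)
  then have "continuous_on (S \<times> cbox 0 (1::real)) (\<lambda>z. h (fst z + circlepath 0 \<rho> (snd z) *s v) / circlepath 0 \<rho> (snd z))"
    by (intro continuous_intros) (use circlepath_0_nonzero[OF assms(2)] in auto)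
  then show ?thesis by (simp add: case_prod_beta)
qed

lemma continuous_on_frechet_derivative:
  fixes g :: "complex ^ 'm::finite \<Rightarrow> complex"
  assumes U: "open U" and h: "holo_on U g"
  shows "continuous_on U (\<lambda>y. frechet_derivative g (at y) v)"
proof (rule continuous_at_imp_continuous_on, intro ballI)
  fix p assume p: "p \<in> U"
  obtain \<delta> \<rho> where dp: "\<delta> > 0" "\<rho> > 0"
    and inU: "\<And>y z. y \<in> ball p \<delta> \<Longrightarrow> cmod z \<le> \<rho> \<Longrightarrow> y + z *s v \<in> U"
    and rep: "\<And>y. y \<in> ball p \<delta> \<Longrightarrow> frechet_derivative g (at y) v
        = integral {0..1} (\<lambda>t. g (y + circlepath 0 \<rho> t *s v) / circlepath 0 \<rho> t)"
    by (rule frechet_derivative_circle_integral[OF U h p, of v]) blast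
  have "continuous_on (ball p \<delta> \<times> cbox 0 (1::real)) (\<lambda>(y, t). g (y + circlepath 0 \<rho> t *s v) / circlepath 0 \<rho> t)"
    using dp inU norm_circlepath_0[of \<rho>]
    by (intro continuous_on_circle_integrand[OF holo_on_imp_continuous_on[OF h]]) auto
  then have "continuous_on (ball p \<delta>) (\<lambda>y. integral (cbox 0 1) (\<lambda>t. g (y + circlepath 0 \<rho> t *s v) / circlepath 0 \<rho> t))"
    by (rule integral_continuous_on_param)
  then have "continuous_on (ball p \<delta>) (\<lambda>y. frechet_derivative g (at y) v)"
    by (rule continuous_on_eq) (use rep in \<open>auto simp: cbox_interval\<close>)
  then show "isCont (\<lambda>y. frechet_derivative g (at y) v) p"
    using continuous_on_eq_continuous_at[OF open_ball] centre_in_ball dp(1) by blast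
qed

lemma blinfun_apply_frechet_derivative_divide:
  assumes "holo_on U g" "x \<in> U"
  shows "blinfun_apply (Blinfun (\<lambda>w. frechet_derivative g (at x) w / c)) = (\<lambda>w. frechet_derivative g (at x) w / c)"
proof -
  have "bounded_linear (frechet_derivative g (at x))"
    by (rule has_derivative_bounded_linear[OF holo_on_has_derivative[OF assms]])
  then have "bounded_linear (\<lambda>w. frechet_derivative g (at x) w / c)"
    by (rule bounded_linear_compose[OF bounded_linear_divide, unfolded o_def])
  then show ?thesis by (rule bounded_linear_Blinfun_apply)
qed

lemma continuous_on_blinfun_circle_integrand:
  fixes g :: "complex ^ 'm::finite \<Rightarrow> complex"
  assumes U: "open U" and h: "holo_on U g" and \<rho>: "\<rho> \<noteq> 0"
    and inU: "\<And>y t. y \<in> S \<Longrightarrow> y + circlepath 0 \<rho> t *s v \<in> U"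
  shows "continuous_on (S \<times> cbox 0 1) (\<lambda>(y, t).
    Blinfun (\<lambda>w. frechet_derivative g (at (y + circlepath 0 \<rho> t *s v)) w / circlepath 0 \<rho> t))"
  unfolding continuous_on_eq_continuous_within
proof
  fix z assume z: "z \<in> S \<times> cbox 0 (1::real)"
  have "continuous_on (S \<times> cbox 0 (1::real))
      (\<lambda>(y, t). frechet_derivative g (at (y + circlepath 0 \<rho> t *s v)) b / circlepath 0 \<rho> t)" for b
    by (rule continuous_on_circle_integrand[OF continuous_on_frechet_derivative[OF U h] \<rho> inU])
  then have "continuous_on (S \<times> cbox 0 1) (\<lambda>z. blinfun_apply ((\<lambda>(y, t).
      Blinfun (\<lambda>w. frechet_derivative g (at (y + circlepath 0 \<rho> t *s v)) w / circlepath 0 \<rho> t)) z) b)" for b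
    by (rule continuous_on_eq) (auto simp: blinfun_apply_frechet_derivative_divide[OF h inU])
  then show "continuous (at z within S \<times> cbox 0 1) (\<lambda>(y, t).
      Blinfun (\<lambda>w. frechet_derivative g (at (y + circlepath 0 \<rho> t *s v)) w / circlepath 0 \<rho> t))"
    using z by (intro continuous_blinfun_componentwiseI1) (auto simp: continuous_on_eq_continuous_within)
qed

lemma has_derivative_circle_integral:
  fixes g :: "complex ^ 'm::finite \<Rightarrow> complex"
  assumes U: "open U" and h: "holo_on U g" and S: "open S" "convex S" "p \<in> S" and \<rho>: "\<rho> \<noteq> 0"
    and inU: "\<And>y t. y \<in> S \<Longrightarrow> y + circlepath 0 \<rho> t *s v \<in> U"
  shows "((\<lambda>y. integral {0..1} (\<lambda>t. g (y + circlepath 0 \<rho> t *s v) / circlepath 0 \<rho> t)) has_derivative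
    (\<lambda>w. integral {0..1} (\<lambda>t. frechet_derivative g (at (p + circlepath 0 \<rho> t *s v)) w / circlepath 0 \<rho> t))) (at p)"
proof -
  let ?D = "\<lambda>z. frechet_derivative g (at z)"
  let ?c = "circlepath 0 \<rho>"
  define fx where "fx y t = Blinfun (\<lambda>w. ?D (y + ?c t *s v) w / ?c t)" for y t
  have fx_apply: "blinfun_apply (fx y t) = (\<lambda>w. ?D (y + ?c t *s v) w / ?c t)" if "y \<in> S" for y t
    unfolding fx_def by (rule blinfun_apply_frechet_derivative_divide[OF h inU[OF that]])
  have cont_fx: "continuous_on (S \<times> cbox 0 1) (\<lambda>(y, t). fx y t)"
    unfolding fx_def by (rule continuous_on_blinfun_circle_integrand[OF U h \<rho> inU])
  have "((\<lambda>y. g (y + ?c t *s v) / ?c t) has_derivative blinfun_apply (fx y t)) (at y within S)"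
    if y: "y \<in> S" for y t
  proof -
    have "((\<lambda>y. y + ?c t *s v) has_derivative (\<lambda>w. w)) (at y within S)"
      by (auto intro!: derivative_eq_intros)
    from has_derivative_compose[OF this holo_on_has_derivative[OF h inU[OF y]]]
    have "((\<lambda>y. g (y + ?c t *s v)) has_derivative ?D (y + ?c t *s v)) (at y within S)" .
    then show ?thesis
      unfolding fx_apply[OF y] divide_inverse by (rule has_derivative_mult_left)
  qed
  moreover have "(\<lambda>t. g (y + ?c t *s v) / ?c t) integrable_on cbox 0 1" if y: "y \<in> S" for y
  proof (rule integrable_continuous)
    have "continuous_on (cbox 0 1) (\<lambda>t. (\<lambda>(y, t). g (y + ?c t *s v) / ?c t) (y, t))"
      by (rule continuous_on_compose2[OF continuous_on_circle_integrand[OF holo_on_imp_continuous_on[OF h] \<rho> inU]])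
         (use y in \<open>auto intro!: continuous_intros\<close>)
    then show "continuous_on (cbox 0 1) (\<lambda>t. g (y + ?c t *s v) / ?c t)" by simp
  qed
  ultimately have "((\<lambda>y. integral (cbox 0 1) (\<lambda>t. g (y + ?c t *s v) / ?c t)) has_derivative
      integral (cbox 0 1) (fx p)) (at p within S)"
    by (intro leibniz_rule[OF _ _ cont_fx S(3)]) (auto simp: S)
  moreover have "fx p integrable_on cbox 0 1"
  proof (rule integrable_continuous)
    have "continuous_on (cbox 0 1) (\<lambda>t. (\<lambda>(y, t). fx y t) (p, t))"
      by (rule continuous_on_compose2[OF cont_fx]) (auto intro!: continuous_intros simp: S)
    then show "continuous_on (cbox 0 1) (fx p)" by simp
  qed
  then have "blinfun_apply (integral (cbox 0 1) (fx p)) =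
      (\<lambda>w. integral {0..1} (\<lambda>t. ?D (p + ?c t *s v) w / ?c t))"
    by (simp add: fun_eq_iff blinfun_apply_integral fx_apply[OF S(3)] cbox_interval)
  ultimately show ?thesis
    using at_within_open[OF S(3,1)] by (simp add: cbox_interval)
qed

lemma holo_on_frechet_derivative:
  fixes g :: "complex ^ 'm::finite \<Rightarrow> complex"
  assumes U: "open U" and h: "holo_on U g"
  shows "holo_on U (\<lambda>y. frechet_derivative g (at y) v)"
  unfolding holo_on_def
proof
  fix p assume p: "p \<in> U"
  obtain \<delta> \<rho> where dp: "\<delta> > 0" "\<rho> > 0"
    and inU: "\<And>y z. y \<in> ball p \<delta> \<Longrightarrow> cmod z \<le> \<rho> \<Longrightarrow> y + z *s v \<in> U"
    and rep: "\<And>y. y \<in> ball p \<delta> \<Longrightarrow> frechet_derivative g (at y) v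
        = integral {0..1} (\<lambda>t. g (y + circlepath 0 \<rho> t *s v) / circlepath 0 \<rho> t)"
    by (rule frechet_derivative_circle_integral[OF U h p, of v]) blast
  let ?L = "\<lambda>w. integral {0..1} (\<lambda>t. frechet_derivative g (at (p + circlepath 0 \<rho> t *s v)) w / circlepath 0 \<rho> t)"
  have "((\<lambda>y. integral {0..1} (\<lambda>t. g (y + circlepath 0 \<rho> t *s v) / circlepath 0 \<rho> t)) has_derivative ?L) (at p)"
    using dp inU norm_circlepath_0[of \<rho>]
    by (intro has_derivative_circle_integral[OF U h open_ball[of p \<delta>] convex_ball]) auto
  then have "((\<lambda>y. frechet_derivative g (at y) v) has_derivative ?L) (at p)"
    by (rule has_derivative_transform_within_open[where s="ball p \<delta>"]) (use dp rep in auto)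
  moreover have "?L (c *s w) = c * ?L w" for c w
  proof -
    have "(\<lambda>t. frechet_derivative g (at (p + circlepath 0 \<rho> t *s v)) (c *s w) / circlepath 0 \<rho> t) =
        (\<lambda>t. c * (frechet_derivative g (at (p + circlepath 0 \<rho> t *s v)) w / circlepath 0 \<rho> t))"
      using holo_on_frechet_derivative_smult[OF h] inU[of p] dp norm_circlepath_0[of \<rho>] by auto
    then show ?thesis by (simp only: integral_mult_right)
  qed
  ultimately show "\<exists>L. ((\<lambda>y. frechet_derivative g (at y) v) has_derivative L) (at p) \<and> (\<forall>c x. L (c *s x) = c * L x)"
    by blast
qed

section \<open>Wirtinger derivatives\<close>

lemma wz_eq:
  "(g has_derivative L) (at p) \<Longrightarrow> wz idx j g p = (L (axis (idx j) 1) - \<i> * L (axis (idx j) \<i>)) / 2"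
  unfolding wz_def using frechet_derivative_at by metis

lemma wzb_eq:
  "(g has_derivative L) (at p) \<Longrightarrow> wzb idx j g p = (L (axis (idx j) 1) + \<i> * L (axis (idx j) \<i>)) / 2"
  unfolding wzb_def using frechet_derivative_at by metis

lemma holo_on_frechet_derivative_axis_ii:
  assumes "holo_on U g" "y \<in> U"
  shows "frechet_derivative g (at y) (axis k \<i>) = \<i> * frechet_derivative g (at y) (axis k 1)"
proof -
  have "axis k \<i> = \<i> *s axis k (1::complex)"
    by (simp add: Finite_Cartesian_Product.vec_eq_iff axis_def)
  then show ?thesis by (simp add: holo_on_frechet_derivative_smult[OF assms])
qed

lemma
  assumes "holo_on U g" "y \<in> U"
  shows wz_holo_on: "wz idx j g y = frechet_derivative g (at y) (axis (idx j) 1)"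
    and wzb_holo_on: "wzb idx j g y = 0"
  using wz_eq[OF holo_on_has_derivative[OF assms], of idx j] wzb_eq[OF holo_on_has_derivative[OF assms], of idx j]
    holo_on_frechet_derivative_axis_ii[OF assms, of "idx j"]
  by (simp_all add: field_simps)

lemma
  assumes "holo_on U g" "y \<in> U"
  shows wz_cnj_holo_on: "wz idx j (\<lambda>x. cnj (g x)) y = 0"
    and wzb_cnj_holo_on: "wzb idx j (\<lambda>x. cnj (g x)) y = cnj (wz idx j g y)"
proof -
  have d: "((\<lambda>x. cnj (g x)) has_derivative (\<lambda>v. cnj (frechet_derivative g (at y) v))) (at y)"
    by (rule has_derivative_cnj[OF holo_on_has_derivative[OF assms]])
  show "wz idx j (\<lambda>x. cnj (g x)) y = 0" "wzb idx j (\<lambda>x. cnj (g x)) y = cnj (wz idx j g y)"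
    using wz_eq[OF d] wzb_eq[OF d] holo_on_frechet_derivative_axis_ii[OF assms] wz_holo_on[OF assms]
    by (simp_all add: field_simps)
qed

definition dz_grad :: "(nat \<Rightarrow> 'm::finite) \<Rightarrow> (complex ^ 'm \<Rightarrow> complex) \<Rightarrow> complex ^ 'm \<Rightarrow> nat \<Rightarrow> complex" where
  "dz_grad idx g p = (\<lambda>j. wz idx j g p)"

lemma jac_eq_det_rows: "jac idx hs p = det_rows (length hs) (map (\<lambda>h. dz_grad idx h p) hs)"
  unfolding jac_def detn_eq_det_rows by (rule det_rows_cong) (simp add: dz_grad_def)

section \<open>The rigid defining function\<close>

definition rigid_defining_function ::
    "(nat \<Rightarrow> 'm::finite) \<Rightarrow> nat \<Rightarrow> nat \<Rightarrow> (nat \<Rightarrow> complex ^ 'm \<Rightarrow> complex) \<Rightarrow> complex ^ 'm \<Rightarrow> complex" where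
  "rigid_defining_function idx n N f x = x $ idx n + cnj (x $ idx n) + (\<Sum>\<mu><N. f \<mu> x * cnj (f \<mu> x))"

lemma has_derivative_rigid_defining_function:
  fixes idx :: "nat \<Rightarrow> 'm::finite"
  assumes "\<And>\<mu>. \<mu> < N \<Longrightarrow> (f \<mu> has_derivative D \<mu>) (at y)"
  shows "(rigid_defining_function idx n N f has_derivative (\<lambda>v. v $ idx n + cnj (v $ idx n) +
     (\<Sum>\<mu><N. f \<mu> y * cnj (D \<mu> v) + D \<mu> v * cnj (f \<mu> y)))) (at y)"
proof -
  have v: "((\<lambda>x::complex ^ 'm. x $ idx n) has_derivative (\<lambda>v. v $ idx n)) (at y)"
    by (rule bounded_linear.has_derivative[OF bounded_linear_vec_nth has_derivative_ident])
  have "((\<lambda>x. \<Sum>\<mu><N. f \<mu> x * cnj (f \<mu> x)) has_derivative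
      (\<lambda>v. \<Sum>\<mu><N. f \<mu> y * cnj (D \<mu> v) + D \<mu> v * cnj (f \<mu> y))) (at y)"
    by (rule has_derivative_sum) (use assms in \<open>auto intro!: has_derivative_mult has_derivative_cnj\<close>)
  then show ?thesis
    unfolding rigid_defining_function_def[abs_def]
    by (rule has_derivative_add[OF has_derivative_add[OF v has_derivative_cnj[OF v]]])
qed

lemma axis_nth_inj_on:
  fixes n j :: nat
  assumes "inj_on idx {..n}" "j \<le> n"
  shows "axis (idx j) c $ idx n = (if j = n then c else 0)"
proof (cases "j = n")
  case False
  have "idx j \<noteq> idx n"
  proof
    assume "idx j = idx n"
    from inj_onD[OF assms(1) this] assms(2) False show False by simp
  qed
  then show ?thesis using False by (simp add: axis_def)
qed (simp add: axis_def)

lemma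
  assumes inj: "inj_on idx {..n}" and hf: "\<And>\<mu>. \<mu> < N \<Longrightarrow> holo_on U (f \<mu>)" and y: "y \<in> U"
    and j: "j \<le> n"
  shows wz_rigid_defining_function: "wz idx j (rigid_defining_function idx n N f) y =
      (if j = n then 1 else 0) + (\<Sum>\<mu><N. cnj (f \<mu> y) * wz idx j (f \<mu>) y)"
    and wzb_rigid_defining_function: "wzb idx j (rigid_defining_function idx n N f) y =
      (if j = n then 1 else 0) + (\<Sum>\<mu><N. f \<mu> y * cnj (wz idx j (f \<mu>) y))"
proof -
  let ?D = "\<lambda>\<mu>. frechet_derivative (f \<mu>) (at y)"
  have d: "(rigid_defining_function idx n N f has_derivative (\<lambda>v. v $ idx n + cnj (v $ idx n) +
      (\<Sum>\<mu><N. f \<mu> y * cnj (?D \<mu> v) + ?D \<mu> v * cnj (f \<mu> y)))) (at y)"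
    by (rule has_derivative_rigid_defining_function) (use holo_on_has_derivative[OF hf y] in auto)
  have ii: "\<And>\<mu>. \<mu> < N \<Longrightarrow> ?D \<mu> (axis (idx j) \<i>) = \<i> * ?D \<mu> (axis (idx j) 1)"
    using holo_on_frechet_derivative_axis_ii[OF hf y] by blast
  have wz: "\<And>\<mu>. \<mu> < N \<Longrightarrow> wz idx j (f \<mu>) y = ?D \<mu> (axis (idx j) 1)"
    using wz_holo_on[OF hf y] by blast
  have "(\<Sum>\<mu><N. f \<mu> y * cnj (?D \<mu> (axis (idx j) 1)) + ?D \<mu> (axis (idx j) 1) * cnj (f \<mu> y))
       - \<i> * (\<Sum>\<mu><N. f \<mu> y * cnj (?D \<mu> (axis (idx j) \<i>)) + ?D \<mu> (axis (idx j) \<i>) * cnj (f \<mu> y))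
     = 2 * (\<Sum>\<mu><N. cnj (f \<mu> y) * wz idx j (f \<mu>) y)"
    by (simp add: ii wz sum_distrib_left sum_subtractf[symmetric] algebra_simps)
  then show "wz idx j (rigid_defining_function idx n N f) y =
      (if j = n then 1 else 0) + (\<Sum>\<mu><N. cnj (f \<mu> y) * wz idx j (f \<mu>) y)"
    unfolding wz_eq[OF d] axis_nth_inj_on[OF inj j] by (auto simp: field_simps)
  have "(\<Sum>\<mu><N. f \<mu> y * cnj (?D \<mu> (axis (idx j) 1)) + ?D \<mu> (axis (idx j) 1) * cnj (f \<mu> y))
       + \<i> * (\<Sum>\<mu><N. f \<mu> y * cnj (?D \<mu> (axis (idx j) \<i>)) + ?D \<mu> (axis (idx j) \<i>) * cnj (f \<mu> y))
     = 2 * (\<Sum>\<mu><N. f \<mu> y * cnj (wz idx j (f \<mu>) y))"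
    by (simp add: ii wz sum_distrib_left sum.distrib[symmetric] algebra_simps)
  then show "wzb idx j (rigid_defining_function idx n N f) y =
      (if j = n then 1 else 0) + (\<Sum>\<mu><N. f \<mu> y * cnj (wz idx j (f \<mu>) y))"
    unfolding wzb_eq[OF d] axis_nth_inj_on[OF inj j] by (auto simp: field_simps)
qed

text \<open>The derivatives \<open>\<partial>f\<^sub>\<mu>/\<partial>z\<^sub>l\<close> are holomorphic again, so in
  \<open>\<partial>r/\<partial>conj z\<^sub>l = [l = n] + \<Sum>\<^sub>\<mu> f\<^sub>\<mu> conj (\<partial>f\<^sub>\<mu>/\<partial>z\<^sub>l)\<close>
  the holomorphic derivative only hits the factors \<open>f\<^sub>\<mu>\<close>.\<close>

lemma wz_wzb_rigid_defining_function:
  assumes U: "open U" and inj: "inj_on idx {..n}" and hf: "\<And>\<mu>. \<mu> < N \<Longrightarrow> holo_on U (f \<mu>)"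
    and p: "p \<in> U" and j: "j \<le> n" and l: "l \<le> n"
  shows "wz idx j (wzb idx l (rigid_defining_function idx n N f)) p =
    (\<Sum>\<mu><N. wz idx j (f \<mu>) p * cnj (wz idx l (f \<mu>) p))"
proof -
  define G where "G \<mu> y = frechet_derivative (f \<mu>) (at y) (axis (idx l) 1)" for \<mu> y
  have hG: "holo_on U (G \<mu>)" if "\<mu> < N" for \<mu>
    unfolding G_def by (rule holo_on_frechet_derivative[OF U hf[OF that]])
  define h where "h y = (if l = n then 1 else 0) + (\<Sum>\<mu><N. f \<mu> y * cnj (G \<mu> y))" for y
  have h: "h y = wzb idx l (rigid_defining_function idx n N f) y" if "y \<in> U" for y
  proof -
    have "(\<Sum>\<mu><N. f \<mu> y * cnj (wz idx l (f \<mu>) y)) = (\<Sum>\<mu><N. f \<mu> y * cnj (G \<mu> y))"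
      by (rule sum.cong) (simp_all add: wz_holo_on[OF hf that] G_def)
    then show ?thesis
      by (simp add: h_def wzb_rigid_defining_function[OF inj hf that l])
  qed
  let ?D = "\<lambda>\<mu>. frechet_derivative (f \<mu>) (at p)"
  let ?D' = "\<lambda>\<mu>. frechet_derivative (G \<mu>) (at p)"
  have "(h has_derivative (\<lambda>v. 0 + (\<Sum>\<mu><N. f \<mu> p * cnj (?D' \<mu> v) + ?D \<mu> v * cnj (G \<mu> p)))) (at p)"
    unfolding h_def
    by (intro has_derivative_add has_derivative_const has_derivative_sum has_derivative_mult has_derivative_cnj)
       (use holo_on_has_derivative[OF hf p] holo_on_has_derivative[OF hG p] in auto)
  then have d: "(wzb idx l (rigid_defining_function idx n N f) has_derivative
      (\<lambda>v. 0 + (\<Sum>\<mu><N. f \<mu> p * cnj (?D' \<mu> v) + ?D \<mu> v * cnj (G \<mu> p)))) (at p)"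
    by (rule has_derivative_transform_within_open[OF _ U p h])
  have ii: "\<And>\<mu>. \<mu> < N \<Longrightarrow> ?D \<mu> (axis (idx j) \<i>) = \<i> * ?D \<mu> (axis (idx j) 1)"
    using holo_on_frechet_derivative_axis_ii[OF hf p] by blast
  have ii': "\<And>\<mu>. \<mu> < N \<Longrightarrow> ?D' \<mu> (axis (idx j) \<i>) = \<i> * ?D' \<mu> (axis (idx j) 1)"
    using holo_on_frechet_derivative_axis_ii[OF hG p] by blast
  have wz: "\<And>\<mu>. \<mu> < N \<Longrightarrow> wz idx j (f \<mu>) p = ?D \<mu> (axis (idx j) 1)"
    using wz_holo_on[OF hf p] by blast
  have wzl: "\<And>\<mu>. \<mu> < N \<Longrightarrow> wz idx l (f \<mu>) p = G \<mu> p"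
    using wz_holo_on[OF hf p] by (simp add: G_def)
  have "(\<Sum>\<mu><N. f \<mu> p * cnj (?D' \<mu> (axis (idx j) 1)) + ?D \<mu> (axis (idx j) 1) * cnj (G \<mu> p))
       - \<i> * (\<Sum>\<mu><N. f \<mu> p * cnj (?D' \<mu> (axis (idx j) \<i>)) + ?D \<mu> (axis (idx j) \<i>) * cnj (G \<mu> p))
     = 2 * (\<Sum>\<mu><N. wz idx j (f \<mu>) p * cnj (wz idx l (f \<mu>) p))"
    by (simp add: ii ii' wz wzl sum_distrib_left sum_subtractf[symmetric] algebra_simps)
  then show ?thesis
    unfolding wz_eq[OF d] by (auto simp: field_simps)
qed

lemma one_form_gen_shift:
  "(\<lambda>K. \<Sum>j<m. a j * gen (s + j) K) = one_form (\<lambda>t. if s \<le> t \<and> t < s + m then a (t - s) else 0)"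
proof
  fix K :: "nat set"
  show "(\<Sum>j<m. a j * gen (s + j) K) = one_form (\<lambda>t. if s \<le> t \<and> t < s + m then a (t - s) else 0) K"
  proof (cases "card K = 1")
    case True
    then obtain x where K: "K = {x}" by (auto simp: card_Suc_eq)
    have "(\<Sum>j<m. a j * gen (s + j) K) = (\<Sum>j<m. if s \<le> x \<and> j = x - s then a j else 0)"
      by (rule sum.cong) (auto simp: gen_def K)
    then show ?thesis by (auto simp: K one_form_def)
  next
    case False
    then have "gen (s + j) K = 0" for j by (auto simp: gen_def)
    then show ?thesis using False by (simp add: one_form_def)
  qed
qed

lemma one_form_dz_coeff: "one_form (dz_coeff m a) = (\<lambda>K. \<Sum>j<m. a j * gen j K)"
proof -
  have "(\<lambda>t. if 0 \<le> t \<and> t < 0 + m then a (t - 0) else 0) = dz_coeff m a"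
    by (auto simp: dz_coeff_def fun_eq_iff)
  then show ?thesis using one_form_gen_shift[where a=a and m=m and s=0] by simp
qed

lemma one_form_dzbar_coeff: "one_form (dzbar_coeff m a) = (\<lambda>K. \<Sum>j<m. cnj (a j) * gen (m + j) K)"
proof -
  have "(\<lambda>t. if m \<le> t \<and> t < m + m then cnj (a (t - m)) else 0) = dzbar_coeff m a"
    by (auto simp: dzbar_coeff_def fun_eq_iff)
  then show ?thesis using one_form_gen_shift[where a="\<lambda>j. cnj (a j)" and m=m and s=m] by simp
qed

lemma del_form_eq_one_form: "del_form m idx g p = one_form (dz_coeff m (dz_grad idx g p))"
  by (simp add: del_form_def one_form_dz_coeff dz_grad_def)

lemma delbar_form_eq_one_form: "delbar_form m idx g p = one_form (dzbar_coeff m (\<lambda>j. cnj (wzb idx j g p)))"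
  by (simp add: delbar_form_def one_form_dzbar_coeff)

lemma form_eq_wedge_d_form_cnj:
  assumes "holo_on U g" "p \<in> U"
  shows "form_eq (wedge (d_form m idx g p) (d_form m idx (\<lambda>x. cnj (g x)) p))
    (wedge_list (conj_pair_forms m (dz_grad idx g p)))"
proof -
  have "delbar_form m idx g p = (\<lambda>K. 0)"
    unfolding delbar_form_def using wzb_holo_on[OF assms] by simp
  then have "d_form m idx g p = one_form (dz_coeff m (dz_grad idx g p))"
    by (simp add: d_form_def del_form_eq_one_form)
  moreover have "del_form m idx (\<lambda>x. cnj (g x)) p = (\<lambda>K. 0)"
    unfolding del_form_def using wz_cnj_holo_on[OF assms] by simp
  then have "d_form m idx (\<lambda>x. cnj (g x)) p = one_form (dzbar_coeff m (dz_grad idx g p))"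
    by (simp add: d_form_def delbar_form_eq_one_form wzb_cnj_holo_on[OF assms] dz_grad_def)
  ultimately show ?thesis
    by (simp add: conj_pair_forms_def form_eq_wedge_list_pair)
qed

context
  fixes idx :: "nat \<Rightarrow> 'm::finite" and n N :: nat and f :: "nat \<Rightarrow> complex ^ 'm \<Rightarrow> complex"
    and U :: "(complex ^ 'm) set" and p :: "complex ^ 'm"
  assumes inj: "inj_on idx {..n}" and hf: "\<And>\<mu>. \<mu> < N \<Longrightarrow> holo_on U (f \<mu>)" and p: "p \<in> U"
begin

lemma form_eq_del_wedge_delbar_rigid:
  "form_eq (wedge (del_form (Suc n) idx (rigid_defining_function idx n N f) p)
                  (delbar_form (Suc n) idx (rigid_defining_function idx n N f) p))
    (wedge_list (conj_pair_forms (Suc n) (dz_grad idx (rigid_defining_function idx n N f) p)))"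
proof -
  have "wzb idx j (rigid_defining_function idx n N f) p =
      cnj (dz_grad idx (rigid_defining_function idx n N f) p j)" if "j < Suc n" for j
    using that by (simp add: dz_grad_def wz_rigid_defining_function[OF inj hf p] wzb_rigid_defining_function[OF inj hf p] cnj_sum mult.commute)
  then have "dzbar_coeff (Suc n) (\<lambda>j. cnj (wzb idx j (rigid_defining_function idx n N f) p)) =
      dzbar_coeff (Suc n) (dz_grad idx (rigid_defining_function idx n N f) p)"
    by (auto simp: dzbar_coeff_def fun_eq_iff)
  then show ?thesis
    by (simp add: del_form_eq_one_form delbar_form_eq_one_form conj_pair_forms_def form_eq_wedge_list_pair)
qed

lemma form_eq_ddbar_form_rigid:
  assumes U: "open U"
  shows "form_eq (ddbar_form (Suc n) idx (rigid_defining_function idx n N f) p)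
    (\<lambda>K. \<Sum>\<mu><N. wedge_list (conj_pair_forms (Suc n) (dz_grad idx (f \<mu>) p)) K)"
  unfolding form_eq_def
proof (intro allI impI)
  fix K :: "nat set" assume K: "finite K"
  let ?W = "\<lambda>j l. wedge (gen j) (gen (Suc n + l)) K"
  have "(\<Sum>\<mu><N. wedge_list (conj_pair_forms (Suc n) (dz_grad idx (f \<mu>) p)) K) =
      (\<Sum>\<mu><N. wedge (one_form (dz_coeff (Suc n) (dz_grad idx (f \<mu>) p)))
                      (one_form (dzbar_coeff (Suc n) (dz_grad idx (f \<mu>) p))) K)"
    using form_eq_wedge_list_pair K by (simp add: conj_pair_forms_def form_eq_def)
  also have "\<dots> = (\<Sum>\<mu><N. \<Sum>j<Suc n. dz_grad idx (f \<mu>) p j *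
      (\<Sum>l<Suc n. cnj (dz_grad idx (f \<mu>) p l) * ?W j l))"
    unfolding one_form_dz_coeff one_form_dzbar_coeff by (simp only: wedge_sum_left wedge_sum_right)
  also have "\<dots> = (\<Sum>j<Suc n. \<Sum>l<Suc n. (\<Sum>\<mu><N. dz_grad idx (f \<mu>) p j * cnj (dz_grad idx (f \<mu>) p l)) * ?W j l)"
    by (simp add: sum_distrib_left sum_distrib_right mult.assoc sum.swap[of _ "{..<N}"] del: sum.lessThan_Suc)
  also have "\<dots> = ddbar_form (Suc n) idx (rigid_defining_function idx n N f) p K"
    unfolding ddbar_form_def
    by (intro sum.cong refl)
       (simp add: dz_grad_def wz_wzb_rigid_defining_function[OF U inj hf p])
  finally show "ddbar_form (Suc n) idx (rigid_defining_function idx n N f) p K =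
      (\<Sum>\<mu><N. wedge_list (conj_pair_forms (Suc n) (dz_grad idx (f \<mu>) p)) K)" by simp
qed

text \<open>The row of \<open>\<partial>r\<close> is the unit row of \<open>z\<^sub>n\<^sub>+\<^sub>1\<close> plus
  \<open>\<Sum>\<^sub>\<mu> conj (f\<^sub>\<mu> p) \<partial>f\<^sub>\<mu>\<close>; expand by linearity in that row.\<close>

lemma det_rows_dz_grad_rigid:
  assumes hs: "length hs = n"
  shows "det_rows (Suc n) (map (\<lambda>h. dz_grad idx h p) hs @ [dz_grad idx (rigid_defining_function idx n N f) p])
    = jac idx hs p + (\<Sum>\<mu><N. jac idx (hs @ [f \<mu>]) p * cnj (f \<mu> p))"
proof -
  let ?R = "map (\<lambda>h. dz_grad idx h p) hs"
  have "det_rows (Suc n) (?R @ [dz_grad idx (rigid_defining_function idx n N f) p]) =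
      det_rows (Suc n) (?R @ [\<lambda>j. (if j = n then 1 else 0) + (\<Sum>\<mu>\<in>{..<N}. cnj (f \<mu> p) * dz_grad idx (f \<mu>) p j)])"
    by (rule det_rows_cong)
       (auto simp: nth_append hs less_Suc_eq dz_grad_def wz_rigid_defining_function[OF inj hf p])
  also have "\<dots> = det_rows (Suc n) (?R @ [\<lambda>j. if j = n then 1 else 0]) +
      (\<Sum>\<mu><N. cnj (f \<mu> p) * det_rows (Suc n) (?R @ [dz_grad idx (f \<mu>) p]))"
    using det_rows_snoc_linear[of ?R n "{..<N}"] hs by simp
  also have "\<dots> = jac idx hs p + (\<Sum>\<mu><N. jac idx (hs @ [f \<mu>]) p * cnj (f \<mu> p))"
    using hs by (simp add: det_rows_snoc_unit jac_eq_det_rows mult.commute)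
  finally show ?thesis .
qed

end

lemma top_coeff_rigid:
  fixes idx :: "nat \<Rightarrow> 'm::finite" and f G :: "nat \<Rightarrow> complex ^ 'm \<Rightarrow> complex"
  assumes kn: "k \<le> n" and bij: "bij_betw idx {..n} UNIV" and U: "open U"
    and hf: "\<And>\<mu>. \<mu> < N \<Longrightarrow> holo_on U (f \<mu>)" and hG: "\<And>l. l < k \<Longrightarrow> holo_on U (G l)" and p: "p \<in> U"
  defines "r \<equiv> rigid_defining_function idx n N f"
  shows "wedge (wedge (wedge (del_form (Suc n) idx r p) (delbar_form (Suc n) idx r p))
                  (wedge_pow (ddbar_form (Suc n) idx r p) (n - k)))
           (bigwedge (\<lambda>l. wedge (d_form (Suc n) idx (G l) p) (d_form (Suc n) idx (\<lambda>x. cnj (G l x)) p)) k)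
           {..<2 * Suc n}
     = signof (interleave (Suc n)) * of_nat (fact (n - k)) *
       complex_of_real (\<Sum>S\<in>{S. S \<subseteq> {..<N} \<and> card S = n - k}.
          cmod (jac idx (map f (sorted_list_of_set S) @ map G [0..<k]) p
             + (\<Sum>\<mu><N. jac idx ((map f (sorted_list_of_set S) @ map G [0..<k]) @ [f \<mu>]) p * cnj (f \<mu> p))) ^ 2)"
proof -
  have inj: "inj_on idx {..n}" using bij by (rule bij_betw_imp_inj_on)
  have m: "Suc n = Suc (n - k + k)" using kn by simp
  have A: "form_eq (wedge (del_form (Suc n) idx r p) (delbar_form (Suc n) idx r p))
      (wedge_list (conj_pair_forms (Suc n) (dz_grad idx r p)))"
    unfolding r_def by (rule form_eq_del_wedge_delbar_rigid[OF inj hf p])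
  have P: "form_eq (ddbar_form (Suc n) idx r p)
      (\<lambda>K. \<Sum>\<mu><N. wedge_list (conj_pair_forms (Suc n) (dz_grad idx (f \<mu>) p)) K)"
    unfolding r_def by (rule form_eq_ddbar_form_rigid[OF inj hf p U])
  have F: "form_eq (wedge (d_form (Suc n) idx (G l) p) (d_form (Suc n) idx (\<lambda>x. cnj (G l x)) p))
      (wedge_list (conj_pair_forms (Suc n) (dz_grad idx (G l) p)))" if "l < k" for l
    by (rule form_eq_wedge_d_form_cnj[OF hG[OF that] p])
  from top_coeff_conj_pairs[where F="\<lambda>l. wedge (d_form (Suc n) idx (G l) p) (d_form (Suc n) idx (\<lambda>x. cnj (G l x)) p)"
      and c="\<lambda>l. dz_grad idx (G l) p", OF m A P F]
  have "wedge (wedge (wedge (del_form (Suc n) idx r p) (delbar_form (Suc n) idx r p))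
                  (wedge_pow (ddbar_form (Suc n) idx r p) (n - k)))
           (bigwedge (\<lambda>l. wedge (d_form (Suc n) idx (G l) p) (d_form (Suc n) idx (\<lambda>x. cnj (G l x)) p)) k)
           {..<2 * Suc n}
      = signof (interleave (Suc n)) * of_nat (fact (n - k)) *
        complex_of_real (\<Sum>S\<in>{S. S \<subseteq> {..<N} \<and> card S = n - k}.
          cmod (det_rows (Suc n) (map (\<lambda>h. dz_grad idx h p) (map f (sorted_list_of_set S) @ map G [0..<k])
            @ [dz_grad idx r p])) ^ 2)"
    by (simp add: o_def)
  also have "(\<Sum>S\<in>{S. S \<subseteq> {..<N} \<and> card S = n - k}.
      cmod (det_rows (Suc n) (map (\<lambda>h. dz_grad idx h p) (map f (sorted_list_of_set S) @ map G [0..<k])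
        @ [dz_grad idx r p])) ^ 2) =
    (\<Sum>S\<in>{S. S \<subseteq> {..<N} \<and> card S = n - k}.
      cmod (jac idx (map f (sorted_list_of_set S) @ map G [0..<k]) p
        + (\<Sum>\<mu><N. jac idx ((map f (sorted_list_of_set S) @ map G [0..<k]) @ [f \<mu>]) p * cnj (f \<mu> p))) ^ 2)"
  proof (rule sum.cong[OF refl])
    fix S assume "S \<in> {S. S \<subseteq> {..<N} \<and> card S = n - k}"
    then have "length (map f (sorted_list_of_set S) @ map G [0..<k]) = n"
      using kn finite_subset[of S "{..<N}"] by auto
    then show "cmod (det_rows (Suc n) (map (\<lambda>h. dz_grad idx h p) (map f (sorted_list_of_set S) @ map G [0..<k])
        @ [dz_grad idx r p])) ^ 2 =
      cmod (jac idx (map f (sorted_list_of_set S) @ map G [0..<k]) p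
        + (\<Sum>\<mu><N. jac idx ((map f (sorted_list_of_set S) @ map G [0..<k]) @ [f \<mu>]) p * cnj (f \<mu> p))) ^ 2"
      unfolding r_def by (simp only: det_rows_dz_grad_rigid[OF inj hf p])
  qed
  finally show ?thesis .
qed

theorem mainTheorem4:
  fixes n k :: nat
  assumes card: "CARD('m::finite) = Suc n"
      and kn: "k \<le> n"
  shows "\<exists>c::complex. c \<noteq> 0 \<and>
    (\<forall>(idx :: nat \<Rightarrow> 'm) (N::nat) (f :: nat \<Rightarrow> complex ^ 'm \<Rightarrow> complex)
       (G :: nat \<Rightarrow> complex ^ 'm \<Rightarrow> complex) (U :: (complex ^ 'm) set) (p :: complex ^ 'm).
       bij_betw idx {..n} UNIV \<longrightarrow> open U \<longrightarrow>
       (\<forall>\<mu><N. holo_on U (f \<mu>)) \<longrightarrow> (\<forall>l<k. holo_on U (G l)) \<longrightarrow> p \<in> U \<longrightarrow>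
       (let m = Suc n;
            r = (\<lambda>x. x $ idx n + cnj (x $ idx n) + (\<Sum>\<mu><N. f \<mu> x * cnj (f \<mu> x)));
            \<Omega> = wedge (wedge (wedge (del_form m idx r p) (delbar_form m idx r p))
                              (wedge_pow (ddbar_form m idx r p) (n - k)))
                       (bigwedge (\<lambda>l. wedge (d_form m idx (G l) p)
                                              (d_form m idx (\<lambda>x. cnj (G l x)) p)) k)
        in \<Omega> {..<2 * m} =
           c * complex_of_real
             (\<Sum>S \<in> {S. S \<subseteq> {..<N} \<and> card S = n - k}.
                (let hs = map f (sorted_list_of_set S) @ map G [0..<k]
                 in cmod (jac idx hs p
                          + (\<Sum>\<mu><N. jac idx (hs @ [f \<mu>]) p * cnj (f \<mu> p)))) ^ 2)))"
proof (intro exI[of _ "signof (interleave (Suc n)) * of_nat (fact (n - k))"] conjI allI impI)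
  show "signof (interleave (Suc n)) * of_nat (fact (n - k)) \<noteq> (0::complex)"
    by (simp add: sign_def)
  fix idx :: "nat \<Rightarrow> 'm" and N :: nat and f G :: "nat \<Rightarrow> complex ^ 'm \<Rightarrow> complex"
    and U :: "(complex ^ 'm) set" and p :: "complex ^ 'm"
  assume bij: "bij_betw idx {..n} UNIV" and U: "open U" and hf: "\<forall>\<mu><N. holo_on U (f \<mu>)"
    and hG: "\<forall>l<k. holo_on U (G l)" and p: "p \<in> U"
  have "\<And>\<mu>. \<mu> < N \<Longrightarrow> holo_on U (f \<mu>)" "\<And>l. l < k \<Longrightarrow> holo_on U (G l)"
    using hf hG by blast+
  note top_coeff_rigid[OF kn bij U this p]
  moreover have "(\<lambda>x. x $ idx n + cnj (x $ idx n) + (\<Sum>\<mu><N. f \<mu> x * cnj (f \<mu> x))) =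
      rigid_defining_function idx n N f"
    by (simp add: fun_eq_iff rigid_defining_function_def)
  ultimately show "let m = Suc n;
            r = (\<lambda>x. x $ idx n + cnj (x $ idx n) + (\<Sum>\<mu><N. f \<mu> x * cnj (f \<mu> x)));
            \<Omega> = wedge (wedge (wedge (del_form m idx r p) (delbar_form m idx r p))
                              (wedge_pow (ddbar_form m idx r p) (n - k)))
                       (bigwedge (\<lambda>l. wedge (d_form m idx (G l) p)
                                              (d_form m idx (\<lambda>x. cnj (G l x)) p)) k)
        in \<Omega> {..<2 * m} =
           signof (interleave (Suc n)) * of_nat (fact (n - k)) * complex_of_real
             (\<Sum>S \<in> {S. S \<subseteq> {..<N} \<and> card S = n - k}.
                (let hs = map f (sorted_list_of_set S) @ map G [0..<k]
                 in cmod (jac idx hs p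
                          + (\<Sum>\<mu><N. jac idx (hs @ [f \<mu>]) p * cnj (f \<mu> p)))) ^ 2)"
    unfolding Let_def by simp
qed

end
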